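(* Let $M$ be a complex manifold, $f:M\to\mathbb{C}$ holomorphic and $Y:=\{f=0\}$. The sheaf $\mathcal{O}_{M|Y}\{\{b\}\}$ is a sheaf of left $\tilde{\mathcal{A}}_{conv.}$-modules, where $B$ acts by $T(b)\cdot\sum_mb^mg_m:=\sum_n b^n\big(\sum_{q+m=n}c_qg_m\big)$ for $T=\sum c_qb^q\in B$, and where $a$ acts by the formula $$a\,(b^mg_m(x)):=b^mf(x)g_m(x)+m\,b^{m+1}g_m(x).$$
   Context: $\tilde{\mathcal{A}}_{conv.}$ is the algebra of formal series $\sum\gamma_{p,q}a^pb^q$ in variables $a,b$ with $ab-ba=b^2$ (product extending that of the polynomial algebra with this relation) such that $|\gamma_{p,q}|\le C_RR^{p+q}q!$ for some $R>1$, $C_R>0$; $B=\mathbb{C}\{\{b\}\}$ is its subalgebra of series $\sum c_qb^q$ with $|c_q|\le CR^qq!$. $\mathcal{O}_{M|Y}\{\{b\}\}$ is the sheaf on $Y$ whose germs at $y_0\in Y$ are series $g=\sum_{m\ge0}b^mg_m(x)$ where the $g_m$ are continuous on some compact neighbourhood $K$ of $y_0$ in $M$, holomorphic in its interior, and $\|g_m\|_K\le C_RR^mm!$ for some $R>1$, $C_R>0$ ($\|\cdot\|_K$ the sup-norm on $K$). *)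

theory Defs
  imports "HOL-Analysis.Analysis"
begin

definition cholo :: "(complex^'n \<Rightarrow> complex) \<Rightarrow> (complex^'n) set \<Rightarrow> bool" where
  "cholo g S \<longleftrightarrow> (\<forall>z\<in>S. \<exists>L. (g has_derivative L) (at z) \<and> (\<forall>c v. L (c *s v) = c * L v))"

text \<open>A holomorphic atlas on the whole space 'a (the manifold M is the space 'a itself).\<close>
definition complex_atlas :: "('a::topological_space set \<times> ('a \<Rightarrow> complex^'n)) set \<Rightarrow> bool" where
  "complex_atlas A \<longleftrightarrow>
     \<Union>(fst ` A) = UNIV \<and>
     (\<forall>(U,\<phi>)\<in>A. open U \<and> open (\<phi> ` U) \<and> homeomorphism U (\<phi> ` U) \<phi> (inv_into U \<phi>)) \<and>
     (\<forall>(U,\<phi>)\<in>A. \<forall>(V,\<psi>)\<in>A. \<forall>k.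
        cholo (\<lambda>z. \<psi> (inv_into U \<phi> z) $ k) (\<phi> ` (U \<inter> V)))"

definition mholo :: "('a::topological_space set \<times> ('a \<Rightarrow> complex^'n)) set \<Rightarrow> ('a \<Rightarrow> complex) \<Rightarrow> 'a set \<Rightarrow> bool" where
  "mholo A g W \<longleftrightarrow> (\<forall>(U,\<phi>)\<in>A. cholo (g \<circ> inv_into U \<phi>) (\<phi> ` (U \<inter> W)))"

section \<open>The algebra tilde-A_conv: series sum gamma_{p,q} a^p b^q with ab - ba = b^2\<close>

text \<open>NO q r i j = coefficient of a^i b^j in the normal ordering of b^q a^r
  (using b^j a = a b^j - j b^(j+1)).\<close>
fun NO :: "nat \<Rightarrow> nat \<Rightarrow> nat \<Rightarrow> nat \<Rightarrow> complex" where
  "NO q 0 i j = (if i = 0 \<and> j = q then 1 else 0)"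
| "NO q (Suc r) i j =
     (if 1 \<le> i then NO q r (i - 1) j else 0)
     - (if 1 \<le> j then of_nat (j - 1) * NO q r i (j - 1) else 0)"

text \<open>Product of formal series (coefficient of a^P b^Q).  Only terms with q + r = i + j
  contribute, so the sum is finite.\<close>
definition amul :: "(nat \<Rightarrow> nat \<Rightarrow> complex) \<Rightarrow> (nat \<Rightarrow> nat \<Rightarrow> complex) \<Rightarrow> nat \<Rightarrow> nat \<Rightarrow> complex" where
  "amul \<gamma> \<delta> P Q =
     (\<Sum>p\<le>P. \<Sum>s\<le>Q. \<Sum>q\<le>(P - p) + (Q - s).
        \<gamma> p q * \<delta> ((P - p) + (Q - s) - q) s * NO q ((P - p) + (Q - s) - q) (P - p) (Q - s))"

definition aone :: "nat \<Rightarrow> nat \<Rightarrow> complex" where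
  "aone p q = (if p = 0 \<and> q = 0 then 1 else 0)"

definition aelt :: "nat \<Rightarrow> nat \<Rightarrow> complex" where
  "aelt p q = (if p = 1 \<and> q = 0 then 1 else 0)"

definition in_Aconv :: "(nat \<Rightarrow> nat \<Rightarrow> complex) \<Rightarrow> bool" where
  "in_Aconv \<gamma> \<longleftrightarrow> (\<exists>R>1. \<exists>C>0. \<forall>p q. norm (\<gamma> p q) \<le> C * R ^ (p + q) * fact q)"

definition in_B :: "(nat \<Rightarrow> complex) \<Rightarrow> bool" where
  "in_B c \<longleftrightarrow> (\<exists>R>1. \<exists>C>0. \<forall>q. norm (c q) \<le> C * R ^ q * fact q)"

definition Bemb :: "(nat \<Rightarrow> complex) \<Rightarrow> nat \<Rightarrow> nat \<Rightarrow> complex" where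
  "Bemb c p q = (if p = 0 then c q else 0)"

section \<open>The sheaf O_{M|Y}{{b}}: series sum b^m g_m(x), g :: nat => M => C\<close>

definition conv_series :: "('a::topological_space set \<times> ('a \<Rightarrow> complex^'n)) set \<Rightarrow> 'a set \<Rightarrow> (nat \<Rightarrow> 'a \<Rightarrow> complex) \<Rightarrow> bool" where
  "conv_series A K g \<longleftrightarrow> compact K \<and>
     (\<forall>m. continuous_on K (g m) \<and> mholo A (g m) (interior K)) \<and>
     (\<exists>R>1. \<exists>C>0. \<forall>m. \<forall>x\<in>K. norm (g m x) \<le> C * R ^ m * fact m)"

definition is_germ :: "('a::topological_space set \<times> ('a \<Rightarrow> complex^'n)) set \<Rightarrow> 'a \<Rightarrow> (nat \<Rightarrow> 'a \<Rightarrow> complex) \<Rightarrow> bool" where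
  "is_germ A y0 g \<longleftrightarrow> (\<exists>K. y0 \<in> interior K \<and> conv_series A K g)"

definition germ_eq :: "'a::topological_space \<Rightarrow> (nat \<Rightarrow> 'a \<Rightarrow> complex) \<Rightarrow> (nat \<Rightarrow> 'a \<Rightarrow> complex) \<Rightarrow> bool" where
  "germ_eq y0 g h \<longleftrightarrow> (\<exists>V. open V \<and> y0 \<in> V \<and> (\<forall>n. \<forall>x\<in>V. g n x = h n x))"

text \<open>Action of a:  a (b^m g_m) = b^m f g_m + m b^(m+1) g_m.\<close>
definition Aop :: "('a \<Rightarrow> complex) \<Rightarrow> (nat \<Rightarrow> 'a \<Rightarrow> complex) \<Rightarrow> nat \<Rightarrow> 'a \<Rightarrow> complex" where
  "Aop f g = (\<lambda>n x. f x * g n x + (if n = 0 then 0 else of_nat (n - 1) * g (n - 1) x))"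

definition bshift :: "(nat \<Rightarrow> 'a \<Rightarrow> complex) \<Rightarrow> nat \<Rightarrow> 'a \<Rightarrow> complex" where
  "bshift g = (\<lambda>n x. if n = 0 then 0 else g (n - 1) x)"

definition Bact :: "(nat \<Rightarrow> complex) \<Rightarrow> (nat \<Rightarrow> 'a \<Rightarrow> complex) \<Rightarrow> nat \<Rightarrow> 'a \<Rightarrow> complex" where
  "Bact c g = (\<lambda>n x. \<Sum>q\<le>n. c q * g (n - q) x)"

text \<open>Action of a general element sum gamma_{p,q} a^p b^q: coefficient n is
  sum over p (infinite) and q <= n (b^q g has no coefficients below q).\<close>
definition act :: "('a \<Rightarrow> complex) \<Rightarrow> (nat \<Rightarrow> nat \<Rightarrow> complex) \<Rightarrow> (nat \<Rightarrow> 'a \<Rightarrow> complex) \<Rightarrow> nat \<Rightarrow> 'a \<Rightarrow> complex" where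
  "act f \<gamma> g = (\<lambda>n x. \<Sum>p. \<Sum>q\<le>n. \<gamma> p q * ((Aop f ^^ p) ((bshift ^^ q) g)) n x)"

end

theory Submission
  imports Defs
begin

text \<open>
  At a point x with f x = w a germ reduces to its coefficient sequence u m = g m x, on which
  a and b act by (a u) n = w u n + (n - 1) u (n - 1) and (b u) n = u (n - 1).  Since b only
  raises degrees, the n-th coefficient of a^p b^q u is the finite expression
  \<Sum>k. (p choose k) w^(p-k) (n-1)\<cdots>(n-k) u (n-k-q), of size at most (2|w|)^p times a bound
  depending only on n.  Against the growth C R^(p+q) q! of the coefficients of an element of
  tilde-A_conv this makes the series over p converge geometrically wherever |f| < 1/(4R),
  which is a neighbourhood of y0 because f y0 = 0.  Regrouping that series by powers of w
  exhibits each new coefficient as a finite combination of the g m with convergent power series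
  in f, hence holomorphic, and the same estimates give the Gevrey bounds.  Associativity comes
  from the normal-ordering identity b^q a^r = \<Sum> NO q r i j a^i b^j: both sides are
  rearrangements of one absolutely summable family indexed by (p, r, q, s, j).  The other
  module axioms hold termwise.
\<close>

section \<open>The action on coefficient sequences at a point\<close>

definition a_seq :: "complex \<Rightarrow> (nat \<Rightarrow> complex) \<Rightarrow> nat \<Rightarrow> complex" where
  "a_seq w h = (\<lambda>n. w * h n + (if n = 0 then 0 else of_nat (n - 1) * h (n - 1)))"

definition b_seq :: "(nat \<Rightarrow> complex) \<Rightarrow> nat \<Rightarrow> complex" where
  "b_seq h = (\<lambda>n. if n = 0 then 0 else h (n - 1))"

definition ab_seq :: "complex \<Rightarrow> nat \<Rightarrow> nat \<Rightarrow> (nat \<Rightarrow> complex) \<Rightarrow> nat \<Rightarrow> complex" where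
  "ab_seq w p q h = (a_seq w ^^ p) ((b_seq ^^ q) h)"

definition act_seq :: "complex \<Rightarrow> (nat \<Rightarrow> nat \<Rightarrow> complex) \<Rightarrow> (nat \<Rightarrow> complex) \<Rightarrow> nat \<Rightarrow> complex" where
  "act_seq w \<gamma> u n = (\<Sum>p. \<Sum>q\<le>n. \<gamma> p q * ab_seq w p q u n)"

lemma b_seq_pow: "(b_seq ^^ q) h n = (if q \<le> n then h (n - q) else 0)"
  by (induction q arbitrary: n) (auto simp: b_seq_def)

lemma bshift_pow: "(bshift ^^ q) g n x = (b_seq ^^ q) (\<lambda>m. g m x) n"
  by (induction q arbitrary: n) (simp_all add: bshift_def b_seq_def)

lemma Aop_pow: "(Aop f ^^ p) G n x = (a_seq (f x) ^^ p) (\<lambda>m. G m x) n"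
  by (induction p arbitrary: n) (simp_all add: Aop_def a_seq_def)

lemma Aop_pow_bshift_pow: "((Aop f ^^ p) ((bshift ^^ q) g)) n x = ab_seq (f x) p q (\<lambda>m. g m x) n"
  unfolding Aop_pow ab_seq_def by (simp add: bshift_pow)

lemma act_eq_act_seq: "act f \<gamma> g n x = act_seq (f x) \<gamma> (\<lambda>m. g m x) n"
  by (simp add: act_def act_seq_def Aop_pow_bshift_pow)

text \<open>ffact_pred n k = (n - 1)(n - 2)\<cdots>(n - k), the weight collected by k steps u n \<mapsto> (n - 1) u (n - 1).\<close>
fun ffact_pred :: "nat \<Rightarrow> nat \<Rightarrow> nat" where
  "ffact_pred n 0 = 1"
| "ffact_pred n (Suc k) = (n - 1) * ffact_pred (n - 1) k"

lemma ffact_pred_eq_0: "n < k \<Longrightarrow> ffact_pred n k = 0"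
proof (induction k arbitrary: n)
  case (Suc k) then show ?case by (cases n) auto
qed simp

lemma ffact_pred_mult_fact_le: "k \<le> n \<Longrightarrow> ffact_pred n k * fact (n - k) \<le> (fact n :: nat)"
proof (induction k arbitrary: n)
  case (Suc k)
  then obtain m where m: "n = Suc m" by (cases n) auto
  have "ffact_pred m k * fact (m - k) \<le> (fact m :: nat)" using Suc by (simp add: m)
  then have "m * (ffact_pred m k * fact (m - k)) \<le> m * (fact m :: nat)" by simp
  also have "\<dots> \<le> fact n" by (simp add: m)
  finally show ?case using m by (simp add: mult.assoc)
qed simp

lemma ffact_pred_mult_fact_fact_le:
  assumes "q + k \<le> n"
  shows "ffact_pred n k * fact (n - k - q) * fact q \<le> (fact n :: nat)"
proof -
  have "fact q * fact (n - k - q) * ((n - k) choose q) = (fact (n - k) :: nat)"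
    using assms by (intro binomial_fact_lemma) auto
  moreover have "0 < (n - k) choose q" using assms by simp
  moreover have "fact q * fact (n - k - q) * 1 \<le> fact q * fact (n - k - q) * ((n - k) choose q)"
    using \<open>0 < (n - k) choose q\<close> by (intro mult_le_mono2) (simp add: Suc_le_eq)
  ultimately have "fact q * fact (n - k - q) \<le> (fact (n - k) :: nat)" by simp
  then have "ffact_pred n k * (fact (n - k - q) * fact q) \<le> ffact_pred n k * fact (n - k)"
    by (simp add: mult.commute)
  also have "\<dots> \<le> fact n" using assms by (intro ffact_pred_mult_fact_le) auto
  finally show ?thesis by (simp add: mult.assoc)
qed

lemma a_seq_pow:
  "(a_seq w ^^ p) H n = (\<Sum>k\<le>p. of_nat (p choose k) * w^(p-k) * of_nat (ffact_pred n k) * H (n - k))"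
proof (induction p arbitrary: n)
  case 0 then show ?case by simp
next
  case (Suc p)
  define a where "a k = w^(Suc p - k) * of_nat (ffact_pred n k) * H (n - k)" for k
  have step: "(a_seq w ^^ Suc p) H n = w * (a_seq w ^^ p) H n
      + (if n = 0 then 0 else of_nat (n - 1) * (a_seq w ^^ p) H (n - 1))"
    by (simp add: a_seq_def)
  have e1: "w * (a_seq w ^^ p) H n = (\<Sum>k\<le>p. of_nat (p choose k) * a k)"
    unfolding Suc.IH a_def by (simp add: sum_distrib_left Suc_diff_le algebra_simps)
  have e2: "(if n = 0 then 0 else of_nat (n - 1) * (a_seq w ^^ p) H (n - 1))
      = (\<Sum>k\<le>p. of_nat (p choose k) * a (Suc k))"
    by (cases n) (simp_all add: Suc.IH a_def sum_distrib_left algebra_simps)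
  \<comment> \<open>Pascal's rule\<close>
  have "(\<Sum>k\<le>Suc p. of_nat (Suc p choose k) * a k)
      = a 0 + (\<Sum>k\<le>p. of_nat (p choose Suc k) * a (Suc k)) + (\<Sum>k\<le>p. of_nat (p choose k) * a (Suc k))"
    by (subst sum.atMost_Suc_shift) (simp add: sum.distrib algebra_simps)
  also have "a 0 + (\<Sum>k\<le>p. of_nat (p choose Suc k) * a (Suc k)) = (\<Sum>k\<le>Suc p. of_nat (p choose k) * a k)"
    by (subst sum.atMost_Suc_shift) simp
  also have "\<dots> = (\<Sum>k\<le>p. of_nat (p choose k) * a k)"
    by simp
  finally show ?case unfolding step e1 e2 by (simp add: a_def mult.assoc)
qed

definition ab_coeff :: "complex \<Rightarrow> nat \<Rightarrow> nat \<Rightarrow> nat \<Rightarrow> nat \<Rightarrow> complex" where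
  "ab_coeff w p q n k =
     of_nat (p choose k) * w^(p-k) * of_nat (ffact_pred n k) * (if q + k \<le> n then 1 else 0)"

lemma ab_seq_eq_sum: "ab_seq w p q h n = (\<Sum>k\<le>p. ab_coeff w p q n k * h (n - k - q))"
  unfolding ab_seq_def a_seq_pow b_seq_pow ab_coeff_def
  by (intro sum.cong refl) (auto simp: ffact_pred_eq_0)

lemma ab_seq_eq_0: "n < q \<Longrightarrow> ab_seq w p q h n = 0"
  unfolding ab_seq_eq_sum ab_coeff_def by simp

lemma ab_seq_cong: "(\<And>m. m \<le> n \<Longrightarrow> h m = h' m) \<Longrightarrow> ab_seq w p q h n = ab_seq w p q h' n"
  unfolding ab_seq_eq_sum by (intro sum.cong) auto

lemma ab_seq_add: "ab_seq w p q (\<lambda>m. h m + h' m) n = ab_seq w p q h n + ab_seq w p q h' n"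
  unfolding ab_seq_eq_sum by (simp add: sum.distrib algebra_simps)

lemma ab_seq_cmult: "ab_seq w p q (\<lambda>m. c * h m) n = c * ab_seq w p q h n"
  unfolding ab_seq_eq_sum by (simp add: sum_distrib_left algebra_simps)

lemma ab_seq_sum: "ab_seq w p q (\<lambda>m. \<Sum>x\<in>S. h x m) n = (\<Sum>x\<in>S. ab_seq w p q (h x) n)"
  unfolding ab_seq_eq_sum by (simp add: sum_distrib_left sum.swap[of _ S])

lemma ab_seq_suminf:
  assumes "\<And>m. summable (\<lambda>r. H r m)"
  shows "summable (\<lambda>r. ab_seq w p q (H r) n)"
    and "ab_seq w p q (\<lambda>m. \<Sum>r. H r m) n = (\<Sum>r. ab_seq w p q (H r) n)"
proof -
  have s: "summable (\<lambda>r. ab_coeff w p q n k * H r (n - k - q))" for k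
    by (intro summable_mult assms)
  show "summable (\<lambda>r. ab_seq w p q (H r) n)"
    unfolding ab_seq_eq_sum by (intro summable_sum s)
  show "ab_seq w p q (\<lambda>m. \<Sum>r. H r m) n = (\<Sum>r. ab_seq w p q (H r) n)"
    unfolding ab_seq_eq_sum by (simp add: s suminf_sum suminf_mult assms)
qed

section \<open>Normal ordering\<close>

lemma NO_nonzeroD: "NO q r i j \<noteq> 0 \<Longrightarrow> i + j = q + r \<and> q \<le> j"
proof (induction r arbitrary: i j)
  case 0 then show ?case by (auto split: if_splits)
next
  case (Suc r)
  show ?case
  proof (cases "(if 1 \<le> i then NO q r (i - 1) j else 0) \<noteq> 0")
    case True
    then show ?thesis using Suc.IH[of "i - 1" j] by (auto split: if_splits)
  next
    case False
    then have "(if 1 \<le> j then of_nat (j - 1) * NO q r i (j - 1) else 0) \<noteq> 0"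
      using Suc.prems by auto
    then show ?thesis using Suc.IH[of i "j - 1"] by (auto split: if_splits)
  qed
qed

lemma norm_NO_le: "norm (NO q r i j) \<le> 2^r * real j ^ j"
proof (induction r arbitrary: i j)
  case 0
  have "1 \<le> real j ^ j" by (cases "j = 0") (auto intro: one_le_power)
  then show ?case by auto
next
  case (Suc r)
  have a: "norm (if 1 \<le> i then NO q r (i - 1) j else 0) \<le> 2^r * real j ^ j"
    using Suc.IH[of "i - 1" j] by auto
  have b: "norm (if 1 \<le> j then of_nat (j - 1) * NO q r i (j - 1) else 0) \<le> 2^r * real j ^ j"
  proof (cases "1 \<le> j")
    case True
    have "norm (of_nat (j - 1) * NO q r i (j - 1)) = real (j - 1) * norm (NO q r i (j - 1))"
      by (simp add: norm_mult)
    also have "\<dots> \<le> real (j - 1) * (2^r * real (j - 1) ^ (j - 1))"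
      using Suc.IH by (intro mult_left_mono) auto
    also have "\<dots> = 2^r * real (j - 1) ^ j"
      using True by (cases j) auto
    also have "\<dots> \<le> 2^r * real j ^ j"
      by (intro mult_left_mono power_mono) auto
    finally show ?thesis using True by simp
  qed auto
  have "norm (NO q (Suc r) i j) \<le> norm (if 1 \<le> i then NO q r (i - 1) j else 0)
      + norm (if 1 \<le> j then of_nat (j - 1) * NO q r i (j - 1) else 0)"
    by (simp only: NO.simps norm_triangle_ineq4)
  also have "\<dots> \<le> 2^r * real j ^ j + 2^r * real j ^ j" using a b by linarith
  finally show ?case by (simp del: NO.simps add: ac_simps)
qed

lemma sum_NO_Suc:
  assumes "q + r \<le> N"
  shows "(\<Sum>i\<le>N. \<Sum>j\<le>N. NO q r i j * (X (Suc i) j - of_nat j * X i (Suc j)))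
       = (\<Sum>i\<le>Suc N. \<Sum>j\<le>Suc N. NO q (Suc r) i j * (X i j :: complex))"
proof -
  have zero_i: "NO q r i (Suc N) = 0" and zero_j: "NO q r (Suc N) j = 0" for i j
    using NO_nonzeroD[of q r i "Suc N"] NO_nonzeroD[of q r "Suc N" j] assms by auto
  have up: "(\<Sum>i\<le>N. \<Sum>j\<le>N. NO q r i j * X (Suc i) j)
      = (\<Sum>i\<le>Suc N. \<Sum>j\<le>Suc N. (if 1 \<le> i then NO q r (i - 1) j else 0) * X i j)"
    by (subst sum.atMost_Suc_shift) (simp add: zero_i)
  define G where "G i = (\<Sum>j\<le>Suc N. (if 1 \<le> j then of_nat (j - 1) * NO q r i (j - 1) else 0) * X i j)" for i
  have inner: "(\<Sum>j\<le>N. of_nat j * NO q r i j * X i (Suc j)) = G i" for i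
    unfolding G_def by (subst sum.atMost_Suc_shift) simp
  have "G (Suc N) = 0"
    unfolding G_def by (simp only: zero_j mult_zero_right mult_zero_left if_cancel sum.neutral_const)
  then have right: "(\<Sum>i\<le>N. \<Sum>j\<le>N. of_nat j * NO q r i j * X i (Suc j)) = (\<Sum>i\<le>Suc N. G i)"
    by (simp add: inner)
  have "(\<Sum>i\<le>N. \<Sum>j\<le>N. NO q r i j * (X (Suc i) j - of_nat j * X i (Suc j)))
      = (\<Sum>i\<le>N. \<Sum>j\<le>N. NO q r i j * X (Suc i) j) - (\<Sum>i\<le>N. \<Sum>j\<le>N. of_nat j * NO q r i j * X i (Suc j))"
    by (simp add: sum_subtractf algebra_simps)
  also have "\<dots> = (\<Sum>i\<le>Suc N. \<Sum>j\<le>Suc N. NO q (Suc r) i j * X i j)"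
    unfolding up right G_def by (simp add: sum_subtractf algebra_simps)
  finally show ?thesis .
qed

lemma b_seq_pow_a_seq:
  "(b_seq ^^ j) (a_seq w h) n = a_seq w ((b_seq ^^ j) h) n - of_nat j * (b_seq ^^ Suc j) h n"
proof -
  have "(b_seq ^^ Suc j) h n = (if Suc j \<le> n then h (n - Suc j) else 0)" by (rule b_seq_pow)
  then show ?thesis
    unfolding b_seq_pow a_seq_def
    by (cases "j \<le> n"; cases "Suc j \<le> n") (auto simp: Suc_diff_Suc of_nat_diff algebra_simps)
qed

lemma a_seq_pow_diff:
  "(a_seq w ^^ i) (\<lambda>m. F m - c * G m) n = (a_seq w ^^ i) F n - c * (a_seq w ^^ i) G n"
  unfolding a_seq_pow by (simp add: sum_subtractf sum_distrib_left algebra_simps)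

lemma a_seq_pow_sum: "(a_seq w ^^ i) (\<lambda>m. \<Sum>x\<in>S. F x m) n = (\<Sum>x\<in>S. (a_seq w ^^ i) (F x) n)"
  unfolding a_seq_pow by (simp add: sum_distrib_left sum.swap[of _ S] algebra_simps)

lemma a_seq_pow_cmult: "(a_seq w ^^ i) (\<lambda>m. c * F m) n = c * (a_seq w ^^ i) F n"
  unfolding a_seq_pow by (simp add: sum_distrib_left algebra_simps)

lemma a_seq_pow_b_seq_pow_a_seq:
  "(a_seq w ^^ i) ((b_seq ^^ j) (a_seq w h)) n
     = (a_seq w ^^ Suc i) ((b_seq ^^ j) h) n - of_nat j * (a_seq w ^^ i) ((b_seq ^^ Suc j) h) n"
proof -
  have "(b_seq ^^ j) (a_seq w h) = (\<lambda>m. a_seq w ((b_seq ^^ j) h) m - of_nat j * (b_seq ^^ Suc j) h m)"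
    by (rule ext, rule b_seq_pow_a_seq)
  then show ?thesis
    by (simp only: a_seq_pow_diff) (simp add: funpow_Suc_right del: funpow.simps)
qed

lemma b_pow_a_pow_normal_order:
  assumes "q + r \<le> N"
  shows "(b_seq ^^ q) ((a_seq w ^^ r) h) n
       = (\<Sum>i\<le>N. \<Sum>j\<le>N. NO q r i j * (a_seq w ^^ i) ((b_seq ^^ j) h) n)"
  using assms
proof (induction r arbitrary: N h n)
  case 0
  have if_one: "(if P then 1 else 0) * y = (if P then y else (0::complex))" for P y
    by simp
  have "(\<Sum>j\<le>N. NO q 0 i j * (a_seq w ^^ i) ((b_seq ^^ j) h) n) = (if i = 0 then (b_seq ^^ q) h n else 0)"
    if "i \<le> N" for i
    using 0 by (cases "i = 0") (simp_all add: if_one sum.delta)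
  then show ?case by (simp add: sum.delta)
next
  case (Suc r)
  then obtain N0 where N0: "N = Suc N0" "q + r \<le> N0" by (cases N) auto
  define X where "X i j = (a_seq w ^^ i) ((b_seq ^^ j) h) n" for i j
  have "(b_seq ^^ q) ((a_seq w ^^ Suc r) h) n = (b_seq ^^ q) ((a_seq w ^^ r) (a_seq w h)) n"
    by (simp add: funpow_Suc_right del: funpow.simps)
  also have "\<dots> = (\<Sum>i\<le>N0. \<Sum>j\<le>N0. NO q r i j * (X (Suc i) j - of_nat j * X i (Suc j)))"
    unfolding Suc.IH[OF N0(2)] X_def a_seq_pow_b_seq_pow_a_seq ..
  also have "\<dots> = (\<Sum>i\<le>N. \<Sum>j\<le>N. NO q (Suc r) i j * X i j)"
    unfolding N0(1) by (rule sum_NO_Suc[OF N0(2)])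
  finally show ?case by (simp add: X_def)
qed

lemma sum_atMost_eq_sum_atMost:
  fixes a :: "nat \<Rightarrow> 'a::comm_monoid_add"
  assumes "\<And>j. j > n \<Longrightarrow> a j = 0" "\<And>j. j > N \<Longrightarrow> a j = 0"
  shows "(\<Sum>j\<le>N. a j) = (\<Sum>j\<le>n. a j)"
proof -
  have "(\<Sum>j\<le>N. a j) = (\<Sum>j\<in>{..N} \<inter> {..n}. a j)"
    by (rule sum.mono_neutral_right) (auto, metis assms(1) not_le)
  also have "\<dots> = (\<Sum>j\<le>n. a j)"
    by (rule sum.mono_neutral_left) (auto, metis assms(2) not_le)
  finally show ?thesis .
qed

lemma ab_seq_ab_seq:
  "ab_seq w p q (ab_seq w r s u) n
     = (\<Sum>j\<le>n. NO q r (q + r - j) j * ab_seq w (p + (q + r - j)) (j + s) u n)"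
proof -
  define N where "N = q + r"
  have bq: "(b_seq ^^ q) ((a_seq w ^^ r) ((b_seq ^^ s) u))
      = (\<lambda>m. \<Sum>i\<le>N. \<Sum>j\<le>N. NO q r i j * (a_seq w ^^ i) ((b_seq ^^ j) ((b_seq ^^ s) u)) m)"
    by (rule ext, rule b_pow_a_pow_normal_order) (simp add: N_def)
  have "ab_seq w p q (ab_seq w r s u) n = (\<Sum>i\<le>N. \<Sum>j\<le>N. NO q r i j * ab_seq w (p + i) (j + s) u n)"
    unfolding ab_seq_def bq by (simp add: a_seq_pow_sum a_seq_pow_cmult funpow_add del: funpow.simps)
  also have "\<dots> = (\<Sum>j\<le>N. \<Sum>i\<le>N. NO q r i j * ab_seq w (p + i) (j + s) u n)"
    by (rule sum.swap)
  also have "\<dots> = (\<Sum>j\<le>N. NO q r (N - j) j * ab_seq w (p + (N - j)) (j + s) u n)"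
  proof (rule sum.cong[OF refl])
    fix j assume j: "j \<in> {..N}"
    have "NO q r i j * ab_seq w (p + i) (j + s) u n
        = (if i = N - j then NO q r (N - j) j * ab_seq w (p + (N - j)) (j + s) u n else 0)" for i
    proof (cases "NO q r i j = 0")
      case False
      then have "i + j = q + r" using NO_nonzeroD by blast
      then show ?thesis using j by (auto simp: N_def)
    qed (auto simp: N_def)
    then show "(\<Sum>i\<le>N. NO q r i j * ab_seq w (p + i) (j + s) u n)
        = NO q r (N - j) j * ab_seq w (p + (N - j)) (j + s) u n"
      using j by (simp add: sum.delta)
  qed
  also have "\<dots> = (\<Sum>j\<le>n. NO q r (N - j) j * ab_seq w (p + (N - j)) (j + s) u n)"
  proof (rule sum_atMost_eq_sum_atMost)
    fix j assume "j > n" then show "NO q r (N - j) j * ab_seq w (p + (N - j)) (j + s) u n = 0"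
      by (simp add: ab_seq_eq_0)
  next
    fix j assume "j > N" then show "NO q r (N - j) j * ab_seq w (p + (N - j)) (j + s) u n = 0"
      using NO_nonzeroD[of q r "N - j" j] by (auto simp: N_def)
  qed
  finally show ?thesis by (simp add: N_def)
qed

section \<open>Estimates\<close>

lemma power_diff_le_power_divide:
  assumes "0 < \<rho>" "\<rho> \<le> (1::real)" "k \<le> n" "k \<le> P"
  shows "\<rho>^(P - k) \<le> \<rho>^P / \<rho>^n"
proof -
  have "\<rho>^(P - k + n) \<le> \<rho>^P" using assms by (intro power_decreasing) auto
  then have "\<rho>^(P - k) * \<rho>^n \<le> \<rho>^P" by (simp add: power_add)
  then show ?thesis using assms by (simp add: pos_le_divide_eq)
qed

lemma norm_ab_seq_le:
  assumes w: "norm w \<le> \<rho>" and r: "0 < \<rho>" "\<rho> \<le> 1" and E0: "0 \<le> E"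
    and E: "\<And>k. q + k \<le> n \<Longrightarrow> real (ffact_pred n k) * norm (h (n - k - q)) \<le> E"
  shows "norm (ab_seq w P q h n) \<le> (2*\<rho>)^P / \<rho>^n * (real (n+1) * E)"
proof -
  define b where "b k = norm (ab_coeff w P q n k * h (n - k - q))" for k
  have b0: "b k = 0" if "k > n" for k using that by (simp add: b_def ab_coeff_def)
  have bb: "b k \<le> (2*\<rho>)^P / \<rho>^n * E" for k
  proof (cases "q + k \<le> n \<and> k \<le> P")
    case True
    have "b k = real (P choose k) * norm w ^ (P - k) * (real (ffact_pred n k) * norm (h (n - k - q)))"
      using True by (simp add: b_def ab_coeff_def norm_mult norm_power)
    also have "\<dots> \<le> 2^P * \<rho>^(P - k) * E"
      using True w r E[of k] by (intro mult_mono power_mono binomial_le_pow2) (auto simp: binomial_le_pow2)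
    also have "\<dots> \<le> 2^P * (\<rho>^P / \<rho>^n) * E"
      using True r E0 by (intro mult_right_mono mult_left_mono power_diff_le_power_divide) auto
    also have "\<dots> = (2*\<rho>)^P / \<rho>^n * E" by (simp add: power_mult_distrib)
    finally show ?thesis .
  next
    case False
    then have "b k = 0" by (auto simp: b_def ab_coeff_def)
    then show ?thesis using r E0 by simp
  qed
  have "norm (ab_seq w P q h n) \<le> (\<Sum>k\<le>P. b k)"
    unfolding ab_seq_eq_sum b_def by (rule norm_sum)
  also have "\<dots> = (\<Sum>k\<in>{..P} \<inter> {..n}. b k)"
    by (rule sum.mono_neutral_right) (auto, metis b0 not_le)
  also have "\<dots> \<le> (\<Sum>k\<le>n. b k)"
    by (rule sum_mono2) (auto simp: b_def)
  also have "\<dots> \<le> (\<Sum>k\<le>n. (2*\<rho>)^P / \<rho>^n * E)"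
    by (rule sum_mono) (rule bb)
  also have "\<dots> = (2*\<rho>)^P / \<rho>^n * (real (n+1) * E)" by simp
  finally show ?thesis .
qed

definition ab_majorant :: "nat \<Rightarrow> (nat \<Rightarrow> complex) \<Rightarrow> real" where
  "ab_majorant n h = (\<Sum>k\<le>n. real (ffact_pred n k)) * (\<Sum>m\<le>n. norm (h m))"

lemma ab_majorant_nonneg: "0 \<le> ab_majorant n h"
  unfolding ab_majorant_def by (intro mult_nonneg_nonneg sum_nonneg) auto

lemma ab_majorant_ge: "q + k \<le> n \<Longrightarrow> real (ffact_pred n k) * norm (h (n - k - q)) \<le> ab_majorant n h"
  unfolding ab_majorant_def
  by (intro mult_mono member_le_sum sum_nonneg) auto

lemma norm_ab_seq_le_majorant:
  assumes "norm w \<le> \<rho>" "0 < \<rho>" "\<rho> \<le> 1"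
  shows "norm (ab_seq w P q h n) \<le> (2*\<rho>)^P / \<rho>^n * (real (n+1) * ab_majorant n h)"
  by (rule norm_ab_seq_le[OF assms ab_majorant_nonneg ab_majorant_ge])

lemma norm_act_seq_term_le:
  assumes g: "\<And>p q. norm (\<gamma> p q) \<le> C * R^(p+q) * fact q" and C: "0 \<le> C" and R: "0 \<le> R"
    and w: "norm w \<le> \<rho>" and r: "0 < \<rho>" "\<rho> \<le> 1"
    and E0: "\<And>q. 0 \<le> E q"
    and E: "\<And>q k. q + k \<le> n \<Longrightarrow> real (ffact_pred n k) * norm (u (n - k - q)) \<le> E q"
  shows "norm (\<Sum>q\<le>n. \<gamma> p q * ab_seq w p q u n)
     \<le> (2*\<rho>*R)^p * ((\<Sum>q\<le>n. C * R^q * fact q * (real (n+1) * E q)) / \<rho>^n)"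
proof -
  have "norm (\<Sum>q\<le>n. \<gamma> p q * ab_seq w p q u n) \<le> (\<Sum>q\<le>n. norm (\<gamma> p q) * norm (ab_seq w p q u n))"
    by (rule order_trans[OF norm_sum]) (simp add: norm_mult)
  also have "\<dots> \<le> (\<Sum>q\<le>n. (C * R^(p+q) * fact q) * ((2*\<rho>)^p / \<rho>^n * (real (n+1) * E q)))"
  proof (rule sum_mono)
    fix q
    show "norm (\<gamma> p q) * norm (ab_seq w p q u n) \<le> (C * R^(p+q) * fact q) * ((2*\<rho>)^p / \<rho>^n * (real (n+1) * E q))"
      using C R r E0 by (intro mult_mono g norm_ab_seq_le[OF w r E0 E]) auto
  qed
  also have "\<dots> = (2*\<rho>*R)^p * ((\<Sum>q\<le>n. C * R^q * fact q * (real (n+1) * E q)) / \<rho>^n)"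
    by (simp add: sum_distrib_left sum_divide_distrib power_add power_mult_distrib algebra_simps)
  finally show ?thesis .
qed

lemma act_seq_summable:
  assumes g: "\<And>p q. norm (\<gamma> p q) \<le> C * R^(p+q) * fact q" and C: "0 \<le> C" and R: "1 \<le> R"
    and w: "norm w \<le> 1 / (4 * R)"
  shows "summable (\<lambda>p. \<Sum>q\<le>n. \<gamma> p q * ab_seq w p q u n)"
proof (rule summable_comparison_test'[where N = 0])
  define \<rho> where "\<rho> = 1 / (4 * R)"
  have \<rho>: "0 < \<rho>" "\<rho> \<le> 1" "2 * \<rho> * R < 1" using R by (auto simp: \<rho>_def)
  define D where "D = (\<Sum>q\<le>n. C * R^q * fact q * (real (n+1) * ab_majorant n u)) / \<rho>^n"
  show "summable (\<lambda>p. (2*\<rho>*R)^p * D)"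
    using \<rho> R by (intro summable_mult2 summable_geometric) auto
  show "norm (\<Sum>q\<le>n. \<gamma> p q * ab_seq w p q u n) \<le> (2*\<rho>*R)^p * D" for p
    unfolding D_def using R w
    by (intro norm_act_seq_term_le[OF g C _ _ \<rho>(1,2) ab_majorant_nonneg ab_majorant_ge]) (auto simp: \<rho>_def)
qed

lemma norm_act_seq_le:
  assumes g: "\<And>p q. norm (\<gamma> p q) \<le> C * R^(p+q) * fact q" and C: "0 \<le> C" and R: "0 \<le> R"
    and w: "norm w \<le> \<rho>" and r: "0 < \<rho>" "\<rho> \<le> 1" and rR: "2*\<rho>*R \<le> 1/2"
    and E0: "\<And>q. 0 \<le> E q"
    and E: "\<And>q k. q + k \<le> n \<Longrightarrow> real (ffact_pred n k) * norm (u (n - k - q)) \<le> E q"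
  shows "norm (act_seq w \<gamma> u n) \<le> 2 * ((\<Sum>q\<le>n. C * R^q * fact q * (real (n+1) * E q)) / \<rho>^n)"
proof -
  define D where "D = (\<Sum>q\<le>n. C * R^q * fact q * (real (n+1) * E q)) / \<rho>^n"
  have "norm (act_seq w \<gamma> u n) \<le> (\<Sum>p. (1/2)^p * D)"
    unfolding act_seq_def
  proof (rule norm_suminf_le)
    show "summable (\<lambda>p. (1/2::real)^p * D)" by (intro summable_mult2 summable_geometric) auto
    fix p
    have "norm (\<Sum>q\<le>n. \<gamma> p q * ab_seq w p q u n) \<le> (2*\<rho>*R)^p * D"
      unfolding D_def by (rule norm_act_seq_term_le[OF g C R w r E0 E])
    also have "\<dots> \<le> (1/2)^p * D"
    proof (rule mult_right_mono)
      show "(2*\<rho>*R)^p \<le> (1/2)^p" using rR r R by (intro power_mono) auto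
      show "0 \<le> D" unfolding D_def using C R r E0 by (intro divide_nonneg_pos sum_nonneg mult_nonneg_nonneg) auto
    qed
    finally show "norm (\<Sum>q\<le>n. \<gamma> p q * ab_seq w p q u n) \<le> (1/2)^p * D" .
  qed
  also have "\<dots> = 2 * D" by (simp add: suminf_mult2[symmetric] suminf_geometric)
  finally show ?thesis by (simp add: D_def)
qed

lemma ffact_pred_mult_norm_le:
  fixes u :: "nat \<Rightarrow> complex"
  assumes u: "\<And>m. norm (u m) \<le> C * R^m * fact m" and C: "0 \<le> C" and R: "1 \<le> R"
    and qk: "q + k \<le> n"
  shows "real (ffact_pred n k) * norm (u (n - k - q)) \<le> C * R^n * fact n / fact q"
proof -
  have "real (ffact_pred n k) * norm (u (n - k - q)) \<le> real (ffact_pred n k) * (C * R^(n - k - q) * fact (n - k - q))"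
    by (intro mult_left_mono u) auto
  also have "\<dots> \<le> real (ffact_pred n k) * (C * R^n * fact (n - k - q))"
    using C R by (intro mult_left_mono mult_right_mono power_increasing) auto
  also have "\<dots> = C * R^n * real (ffact_pred n k * fact (n - k - q) * fact q) / fact q"
    by (simp add: of_nat_mult)
  also have "\<dots> \<le> C * R^n * fact n / fact q"
  proof -
    have "real (ffact_pred n k * fact (n - k - q) * fact q) \<le> real (fact n :: nat)"
      using ffact_pred_mult_fact_fact_le[OF qk] by (simp only: of_nat_le_iff)
    then show ?thesis using C R by (intro divide_right_mono mult_left_mono) auto
  qed
  finally show ?thesis .
qed

lemma Suc_mult_Suc_le_four_power: "real (n + 1) * real (n + 1) \<le> 4 ^ n"
proof -
  have "n + 1 \<le> (2::nat)^n" using less_exp[of n] by (simp add: Suc_le_eq)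
  then have "real (n + 1) \<le> 2^n" by (metis of_nat_le_iff of_nat_numeral of_nat_power)
  then have "real (n + 1) * real (n + 1) \<le> 2^n * 2^n" by (intro mult_mono) auto
  also have "(2::real)^n * 2^n = 4^n" by (simp add: power_mult_distrib[symmetric])
  finally show ?thesis .
qed

lemma norm_act_seq_le_fact:
  assumes g: "\<And>p q. norm (\<gamma> p q) \<le> C * R^(p+q) * fact q" and C: "0 \<le> C" and R: "1 \<le> R"
    and w: "norm w \<le> 1 / (8 * R)"
    and u: "\<And>m. norm (u m) \<le> Cg * Rg^m * fact m" and Cg: "0 \<le> Cg" and Rg: "1 \<le> Rg"
  shows "norm (act_seq w \<gamma> u n) \<le> (2*C*Cg) * (32*R*R*Rg)^n * fact n"
proof -
  define \<rho> where "\<rho> = 1 / (8 * R)"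
  have \<rho>0: "0 < \<rho>" and \<rho>1: "\<rho> \<le> 1" and \<rho>R: "2*\<rho>*R \<le> 1/2" using R by (auto simp: \<rho>_def)
  define E where "E q = Cg * Rg^n * fact n / fact q" for q
  have E0: "0 \<le> E q" for q using Cg Rg by (simp add: E_def)
  have Eb: "real (ffact_pred n k) * norm (u (n - k - q)) \<le> E q" if "q + k \<le> n" for q k
    unfolding E_def by (rule ffact_pred_mult_norm_le[OF u Cg Rg that])
  have w': "norm w \<le> \<rho>" using w by (simp add: \<rho>_def)
  have "norm (act_seq w \<gamma> u n) \<le> 2 * ((\<Sum>q\<le>n. C * R^q * fact q * (real (n+1) * E q)) / \<rho>^n)"
    by (rule norm_act_seq_le[OF g C _ w' \<rho>0 \<rho>1 \<rho>R E0 Eb]) (use R in auto)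
  also have "(\<Sum>q\<le>n. C * R^q * fact q * (real (n+1) * E q)) \<le> (\<Sum>q\<le>n. C * R^n * (real (n+1) * (Cg * Rg^n * fact n)))"
  proof (rule sum_mono)
    fix q assume "q \<in> {..n}"
    then have "C * R^q * fact q * (real (n+1) * E q) = C * R^q * (real (n+1) * (Cg * Rg^n * fact n))"
      by (simp add: E_def)
    also have "\<dots> \<le> C * R^n * (real (n+1) * (Cg * Rg^n * fact n))"
      using C R Cg Rg \<open>q \<in> {..n}\<close> by (intro mult_right_mono mult_left_mono power_increasing) auto
    finally show "C * R^q * fact q * (real (n+1) * E q) \<le> C * R^n * (real (n+1) * (Cg * Rg^n * fact n))" .
  qed
  also have "(\<Sum>q\<le>n. C * R^n * (real (n+1) * (Cg * Rg^n * fact n))) = (C * Cg) * (real (n+1) * real (n+1)) * (R^n * Rg^n) * fact n"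
    by (simp add: algebra_simps)
  also have "\<dots> \<le> (C * Cg) * 4^n * (R^n * Rg^n) * fact n"
    using C Cg R Rg by (intro mult_right_mono mult_left_mono Suc_mult_Suc_le_four_power) auto
  finally have "norm (act_seq w \<gamma> u n) \<le> 2 * ((C * Cg) * 4^n * (R^n * Rg^n) * fact n / \<rho>^n)"
    using \<rho>0 by (simp add: divide_right_mono)
  also have "\<dots> = (2*C*Cg) * (32*R*R*Rg)^n * fact n"
  proof -
    have e1: "x / \<rho>^n = x * (8*R)^n" for x by (simp add: \<rho>_def power_one_over)
    have e3: "(32::real)^n = 4^n * 8^n" by (simp add: power_mult_distrib[symmetric])
    have e2: "(32*R*R*Rg)^n = 4^n * (R^n * Rg^n) * (8*R)^n"
      by (simp only: power_mult_distrib e3) (simp add: algebra_simps)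
    show ?thesis unfolding e1 e2 by (simp add: algebra_simps)
  qed
  finally show ?thesis .
qed

section \<open>Associativity\<close>

text \<open>The (p, r, q, s, j) term of \<gamma>\<cdot>(\<delta>\<cdot>u) once b^q a^r has been normal ordered; j is the
  resulting power of b.\<close>
definition assoc_term :: "(nat \<Rightarrow> nat \<Rightarrow> complex) \<Rightarrow> (nat \<Rightarrow> nat \<Rightarrow> complex) \<Rightarrow> complex \<Rightarrow>
    (nat \<Rightarrow> complex) \<Rightarrow> nat \<Rightarrow> (nat \<times> nat) \<times> nat \<times> nat \<times> nat \<Rightarrow> complex" where
  "assoc_term \<gamma> \<delta> w u n = (\<lambda>((p, r), (q, s, j)).
     \<gamma> p q * \<delta> r s * (NO q r (q + r - j) j * ab_seq w (p + (q + r - j)) (j + s) u n))"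

definition amul_term :: "(nat \<Rightarrow> nat \<Rightarrow> complex) \<Rightarrow> (nat \<Rightarrow> nat \<Rightarrow> complex) \<Rightarrow> complex \<Rightarrow>
    (nat \<Rightarrow> complex) \<Rightarrow> nat \<Rightarrow> nat \<times> nat \<times> nat \<times> nat \<times> nat \<Rightarrow> complex" where
  "amul_term \<gamma> \<delta> w u n = (\<lambda>(P, Q, p, s, q).
     \<gamma> p q * \<delta> ((P - p) + (Q - s) - q) s * (NO q ((P - p) + (Q - s) - q) (P - p) (Q - s) * ab_seq w P Q u n))"

definition amul_index :: "nat \<Rightarrow> nat \<Rightarrow> (nat \<times> nat \<times> nat \<times> nat) set" where
  "amul_index n P = Sigma {..n} (\<lambda>Q. Sigma {..P} (\<lambda>p. Sigma {..Q} (\<lambda>s. {..(P - p) + (Q - s)})))"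

lemma sum_amul_index:
  "(\<Sum>Q\<le>n. amul \<gamma> \<delta> P Q * ab_seq w P Q u n) = (\<Sum>y\<in>amul_index n P. amul_term \<gamma> \<delta> w u n (P, y))"
  unfolding amul_def amul_index_def amul_term_def
  by (simp add: sum.Sigma[symmetric] sum_distrib_right mult.assoc) (simp add: ac_simps)

lemma has_sum_assoc_term_iff_support:
  "(assoc_term \<gamma> \<delta> w u n has_sum S) ((UNIV \<times> UNIV) \<times> ({..n} \<times> {..n} \<times> {..n}))
   \<longleftrightarrow> (assoc_term \<gamma> \<delta> w u n has_sum S)
         {((p, r), (q, s, j)). q \<le> n \<and> s \<le> n \<and> j \<le> n \<and> q \<le> j \<and> j \<le> q + r \<and> j + s \<le> n}"
proof (rule has_sum_cong_neutral)
  fix x :: "(nat \<times> nat) \<times> nat \<times> nat \<times> nat"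
  assume x: "x \<in> (UNIV \<times> UNIV) \<times> ({..n} \<times> {..n} \<times> {..n})
    - {((p, r), (q, s, j)). q \<le> n \<and> s \<le> n \<and> j \<le> n \<and> q \<le> j \<and> j \<le> q + r \<and> j + s \<le> n}"
  obtain p r q s j where xe: "x = ((p, r), (q, s, j))" by (cases x) auto
  show "assoc_term \<gamma> \<delta> w u n x = 0"
  proof (cases "j + s \<le> n")
    case False
    then show ?thesis by (simp add: xe assoc_term_def ab_seq_eq_0)
  next
    case True
    have "NO q r (q + r - j) j = 0"
    proof (rule ccontr)
      assume "NO q r (q + r - j) j \<noteq> 0"
      from NO_nonzeroD[OF this] have "q + r - j + j = q + r" "q \<le> j" by auto
      then show False using x True by (auto simp: xe)
    qed
    then show ?thesis by (simp add: xe assoc_term_def)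
  qed
qed auto

lemma has_sum_amul_term_iff_support:
  "(amul_term \<gamma> \<delta> w u n has_sum S) (Sigma UNIV (amul_index n))
   \<longleftrightarrow> (amul_term \<gamma> \<delta> w u n has_sum S) {(P, Q, p, s, q). Q \<le> n \<and> p \<le> P \<and> s \<le> Q \<and> q \<le> Q - s}"
proof (rule has_sum_cong_neutral)
  fix x :: "nat \<times> nat \<times> nat \<times> nat \<times> nat"
  assume x: "x \<in> Sigma UNIV (amul_index n) - {(P, Q, p, s, q). Q \<le> n \<and> p \<le> P \<and> s \<le> Q \<and> q \<le> Q - s}"
  obtain P Q p s q where xe: "x = (P, Q, p, s, q)" by (cases x) auto
  have "NO q ((P - p) + (Q - s) - q) (P - p) (Q - s) = 0"
  proof (rule ccontr)
    assume "NO q ((P - p) + (Q - s) - q) (P - p) (Q - s) \<noteq> 0"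
    from NO_nonzeroD[OF this] have "q \<le> Q - s" by auto
    then show False using x by (auto simp: xe amul_index_def)
  qed
  then show "amul_term \<gamma> \<delta> w u n x = 0" by (simp add: xe amul_term_def)
qed (auto simp: amul_index_def)

text \<open>Both supports are in bijection via (p, r, q, s, j) \<mapsto> (p + q + r - j, j + s, p, s, q).\<close>
lemma has_sum_amul_term_iff_assoc_term:
  "(amul_term \<gamma> \<delta> w u n has_sum S) {(P, Q, p, s, q). Q \<le> n \<and> p \<le> P \<and> s \<le> Q \<and> q \<le> Q - s}
   \<longleftrightarrow> (assoc_term \<gamma> \<delta> w u n has_sum S)
         {((p, r), (q, s, j)). q \<le> n \<and> s \<le> n \<and> j \<le> n \<and> q \<le> j \<and> j \<le> q + r \<and> j + s \<le> n}"
  by (rule has_sum_reindex_bij_witness[where j = "\<lambda>(P, Q, p, s, q). ((p, (P - p) + (Q - s) - q), (q, s, Q - s))"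
        and i = "\<lambda>((p, r), (q, s, j)). (p + (q + r - j), j + s, p, s, q)"])
     (auto simp: assoc_term_def amul_term_def)

lemma act_seq_amul_eq_infsum:
  assumes "assoc_term \<gamma> \<delta> w u n summable_on (UNIV \<times> UNIV) \<times> ({..n} \<times> {..n} \<times> {..n})"
  shows "act_seq w (amul \<gamma> \<delta>) u n = infsum (assoc_term \<gamma> \<delta> w u n) ((UNIV \<times> UNIV) \<times> ({..n} \<times> {..n} \<times> {..n}))"
    (is "_ = ?S")
proof -
  have "(amul_term \<gamma> \<delta> w u n has_sum ?S) (Sigma UNIV (amul_index n))"
    using has_sum_infsum[OF assms]
    unfolding has_sum_amul_term_iff_support has_sum_amul_term_iff_assoc_term has_sum_assoc_term_iff_support .
  then have "((\<lambda>P. \<Sum>y\<in>amul_index n P. amul_term \<gamma> \<delta> w u n (P, y)) has_sum ?S) UNIV"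
    by (rule has_sum_Sigma') (simp add: amul_index_def)
  then show ?thesis
    unfolding act_seq_def sum_amul_index by (intro sums_unique[symmetric] has_sum_imp_sums)
qed

lemma summable_on_double_geometric_Times:
  fixes a b K :: real
  assumes "0 \<le> a" "a < 1" "0 \<le> b" "b < 1" "0 \<le> K" "finite B"
  shows "(\<lambda>((p::nat,r::nat),y::'b). K * a^p * b^r) summable_on ((UNIV \<times> UNIV) \<times> B)"
proof (rule summable_on_SigmaI[where g = "\<lambda>(p,r). real (card B) * (K * a^p * b^r)"])
  fix x :: "nat \<times> nat" assume "x \<in> UNIV \<times> UNIV"
  obtain p r where x: "x = (p,r)" by (cases x)
  show "((\<lambda>y. (\<lambda>((p,r),y). K * a^p * b^r) (x, y)) has_sum (\<lambda>(p,r). real (card B) * (K * a^p * b^r)) x) B"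
    using assms by (simp add: x has_sum_finiteI)
next
  show "(\<lambda>(p,r). real (card B) * (K * a^p * b^r)) summable_on UNIV \<times> UNIV"
  proof (rule summable_on_SigmaI[where g = "\<lambda>p. real (card B) * K * a^p * (1 / (1 - b))"])
    fix p :: nat assume "p \<in> UNIV"
    have "(\<lambda>r. (real (card B) * K * a^p) * b^r) sums ((real (card B) * K * a^p) * (1 / (1 - b)))"
      using assms by (intro sums_mult geometric_sums) auto
    then show "((\<lambda>r. (\<lambda>(p,r). real (card B) * (K * a^p * b^r)) (p, r)) has_sum real (card B) * K * a^p * (1 / (1 - b))) UNIV"
      using assms by (intro sums_nonneg_imp_has_sum) (auto simp: algebra_simps)
  next
    have "summable (\<lambda>p. (real (card B) * K * (1 / (1 - b))) * a^p)"
      using assms by (intro summable_mult summable_geometric) auto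
    then show "(\<lambda>p. real (card B) * K * a^p * (1 / (1 - b))) summable_on UNIV"
      using assms by (subst summable_on_UNIV_nonneg_real_iff) (auto simp: algebra_simps)
  qed (use assms in auto)
qed (use assms in auto)

lemma norm_ab_seq_normal_ordered_le:
  assumes w: "norm w \<le> \<rho>" and r: "0 < \<rho>" "2 * \<rho> \<le> 1" and j: "j \<le> n"
  shows "norm (ab_seq w (p + (q + r - j)) Q u n)
    \<le> (real (n+1) * ab_majorant n u / \<rho>^n / (2*\<rho>)^n) * ((2*\<rho>)^p * (2*\<rho>)^r)"
proof -
  have "norm (ab_seq w (p + (q + r - j)) Q u n) \<le> (2*\<rho>)^(p + (q + r - j)) / \<rho>^n * (real (n+1) * ab_majorant n u)"
    using r by (intro norm_ab_seq_le_majorant[OF w]) auto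
  also have "(2*\<rho>)^(p + (q + r - j)) \<le> (2*\<rho>)^p * ((2*\<rho>)^r / (2*\<rho>)^n)"
  proof -
    have "(2*\<rho>)^((q + r - j) + n) \<le> (2*\<rho>)^r" using r j by (intro power_decreasing) auto
    then have "(2*\<rho>)^(q + r - j) \<le> (2*\<rho>)^r / (2*\<rho>)^n"
      using r by (simp add: power_add pos_le_divide_eq)
    then show ?thesis using r unfolding power_add by (intro mult_left_mono) auto
  qed
  finally have "norm (ab_seq w (p + (q + r - j)) Q u n)
      \<le> (2*\<rho>)^p * ((2*\<rho>)^r / (2*\<rho>)^n) / \<rho>^n * (real (n+1) * ab_majorant n u)"
    using r ab_majorant_nonneg[of n u] by (simp add: divide_right_mono mult_right_mono)
  then show ?thesis by (simp add: field_simps)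
qed

lemma norm_le_Gevrey_atMost:
  fixes \<gamma> :: "nat \<Rightarrow> nat \<Rightarrow> complex"
  assumes "\<And>p q. norm (\<gamma> p q) \<le> C * R^(p+q) * fact q" "0 \<le> C" "1 \<le> R" "q \<le> n"
  shows "norm (\<gamma> p q) \<le> (C * R^n * fact n) * R^p"
proof -
  have "norm (\<gamma> p q) \<le> C * R^p * (R^q * fact q)"
    using assms(1)[of p q] by (simp add: power_add algebra_simps)
  also have "\<dots> \<le> C * R^p * (R^n * fact n)"
    using assms by (intro mult_left_mono mult_mono power_increasing) (auto simp: fact_mono)
  finally show ?thesis by (simp add: algebra_simps)
qed

lemma norm_assoc_term_le:
  assumes gg: "\<And>p q. norm (\<gamma> p q) \<le> Cg * Rg^(p+q) * fact q" and Cg: "0 \<le> Cg" and Rg: "1 \<le> Rg"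
    and gd: "\<And>p q. norm (\<delta> p q) \<le> Cd * Rd^(p+q) * fact q" and Cd: "0 \<le> Cd" and Rd: "1 \<le> Rd"
    and w: "norm w \<le> \<rho>" and r: "0 < \<rho>" "2 * \<rho> \<le> 1"
    and qsj: "q \<le> n" "s \<le> n" "j \<le> n"
  shows "norm (assoc_term \<gamma> \<delta> w u n ((p, r), (q, s, j)))
    \<le> ((Cg * Rg^n * fact n) * (Cd * Rd^n * fact n) * (real (n+1) ^ n) * (real (n+1) * ab_majorant n u / \<rho>^n / (2*\<rho>)^n))
       * (2*\<rho>*Rg)^p * (2*(2*\<rho>*Rd))^r"
proof -
  define A1 where "A1 = Cg * Rg^n * fact n"
  define A2 where "A2 = Cd * Rd^n * fact n"
  define A3 where "A3 = real (n+1) ^ n"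
  define A4 where "A4 = real (n+1) * ab_majorant n u / \<rho>^n / (2*\<rho>)^n"
  have b1: "norm (\<gamma> p q) \<le> A1 * Rg^p"
    unfolding A1_def by (rule norm_le_Gevrey_atMost[OF gg Cg Rg qsj(1)])
  have b2: "norm (\<delta> r s) \<le> A2 * Rd^r"
    unfolding A2_def by (rule norm_le_Gevrey_atMost[OF gd Cd Rd qsj(2)])
  have b3: "norm (NO q r (q + r - j) j) \<le> A3 * 2^r"
  proof -
    have "norm (NO q r (q + r - j) j) \<le> 2^r * real j ^ j" by (rule norm_NO_le)
    also have "real j ^ j \<le> real (n+1) ^ j" using qsj by (intro power_mono) auto
    also have "real (n+1) ^ j \<le> real (n+1) ^ n" using qsj by (intro power_increasing) auto
    finally show ?thesis by (simp add: A3_def algebra_simps)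
  qed
  have b4: "norm (ab_seq w (p + (q + r - j)) (j + s) u n) \<le> A4 * ((2*\<rho>)^p * (2*\<rho>)^r)"
    unfolding A4_def by (rule norm_ab_seq_normal_ordered_le[OF w r qsj(3)])
  have "norm (\<gamma> p q * \<delta> r s * (NO q r (q + r - j) j * ab_seq w (p + (q + r - j)) (j + s) u n))
      = norm (\<gamma> p q) * norm (\<delta> r s) * (norm (NO q r (q + r - j) j) * norm (ab_seq w (p + (q + r - j)) (j + s) u n))"
    by (simp add: norm_mult)
  also have "\<dots> \<le> (A1 * Rg^p) * (A2 * Rd^r) * ((A3 * 2^r) * (A4 * ((2*\<rho>)^p * (2*\<rho>)^r)))"
    using b1 b2 b3 b4 Cg Cd Rg Rd r ab_majorant_nonneg[of n u]
    by (intro mult_mono mult_nonneg_nonneg) (auto simp: A1_def A2_def A3_def A4_def)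
  also have "\<dots> = (A1 * A2 * A3 * A4) * (2*\<rho>*Rg)^p * (2*(2*\<rho>*Rd))^r"
  proof -
    have "(2::real)^r * 2^r = 4^r" by (simp add: power_mult_distrib[symmetric])
    then show ?thesis by (simp add: power_mult_distrib algebra_simps)
  qed
  finally show ?thesis by (simp add: assoc_term_def A1_def A2_def A3_def A4_def)
qed

lemma assoc_term_summable:
  assumes gg: "\<And>p q. norm (\<gamma> p q) \<le> Cg * Rg^(p+q) * fact q" and Cg: "0 \<le> Cg" and Rg: "1 \<le> Rg"
    and gd: "\<And>p q. norm (\<delta> p q) \<le> Cd * Rd^(p+q) * fact q" and Cd: "0 \<le> Cd" and Rd: "1 \<le> Rd"
    and w: "norm w \<le> 1 / (8 * Rg * Rd)"
  shows "assoc_term \<gamma> \<delta> w u n summable_on (UNIV \<times> UNIV) \<times> ({..n} \<times> {..n} \<times> {..n})"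
proof -
  define \<rho> where "\<rho> = 1 / (8 * Rg * Rd)"
  have \<rho>0: "0 < \<rho>" using Rg Rd by (simp add: \<rho>_def)
  have "1 \<le> Rg * Rd" using Rg Rd by (metis mult_mono' mult_1 zero_le_one)
  then have \<rho>1: "2 * \<rho> \<le> 1" by (simp add: \<rho>_def field_simps)
  define a where "a = 2 * \<rho> * Rg"
  define b where "b = 2 * (2 * \<rho> * Rd)"
  have a: "0 \<le> a" "a < 1" and b: "0 \<le> b" "b < 1"
    using Rg Rd \<rho>0 by (auto simp: a_def b_def \<rho>_def field_simps)
  define K where "K = (Cg * Rg^n * fact n) * (Cd * Rd^n * fact n) * (real (n+1) ^ n)
    * (real (n+1) * ab_majorant n u / \<rho>^n / (2*\<rho>)^n)"
  have K: "0 \<le> K" unfolding K_def using Cg Cd Rg Rd \<rho>0 ab_majorant_nonneg[of n u] by simp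
  have "(\<lambda>x. norm (assoc_term \<gamma> \<delta> w u n x)) summable_on (UNIV \<times> UNIV) \<times> ({..n} \<times> {..n} \<times> {..n})"
  proof (rule Infinite_Sum.abs_summable_on_comparison_test')
    show "(\<lambda>((p, r), y). K * a^p * b^r) summable_on (UNIV \<times> UNIV) \<times> ({..n} \<times> {..n} \<times> {..n})"
      by (rule summable_on_double_geometric_Times[OF a b K]) simp
    fix x :: "(nat \<times> nat) \<times> nat \<times> nat \<times> nat"
    assume x: "x \<in> (UNIV \<times> UNIV) \<times> ({..n} \<times> {..n} \<times> {..n})"
    obtain p r q s j where xe: "x = ((p, r), (q, s, j))" by (cases x) auto
    have w\<rho>: "norm w \<le> \<rho>" using w by (simp add: \<rho>_def)
    have "norm (assoc_term \<gamma> \<delta> w u n ((p, r), (q, s, j))) \<le> K * a^p * b^r"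
      unfolding K_def a_def b_def
      by (rule norm_assoc_term_le[OF gg Cg Rg gd Cd Rd w\<rho> \<rho>0 \<rho>1]) (use x xe in auto)
    then show "norm (assoc_term \<gamma> \<delta> w u n x) \<le> (\<lambda>((p, r), y). K * a^p * b^r) x"
      by (simp add: xe)
  qed
  then show ?thesis by (simp add: summable_on_iff_abs_summable_on_complex)
qed

lemma suminf_suminf_eq_infsum:
  fixes f :: "nat \<Rightarrow> nat \<Rightarrow> complex"
  assumes f: "(\<lambda>(p, r). f p r) summable_on UNIV"
  shows "(\<Sum>p. \<Sum>r. f p r) = infsum (\<lambda>(p, r). f p r) UNIV"
proof -
  have suminf_eq: "suminf g = infsum g UNIV" if "g summable_on UNIV" for g :: "nat \<Rightarrow> complex"
    using has_sum_imp_sums[OF has_sum_infsum[OF that]] by (rule sums_unique[symmetric])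
  have f': "(\<lambda>(p, r). f p r) summable_on Sigma UNIV (\<lambda>_. UNIV)"
    using f by simp
  have rows: "f p summable_on UNIV" for p
    by (rule summable_on_SigmaD1[OF f']) simp
  have "(\<lambda>p. infsum (f p) UNIV) summable_on UNIV"
    using summable_on_SigmaD[OF f'] rows by simp
  then have "(\<Sum>p. \<Sum>r. f p r) = infsum (\<lambda>p. infsum (f p) UNIV) UNIV"
    by (simp add: suminf_eq rows)
  also have "\<dots> = infsum (\<lambda>(p, r). f p r) (Sigma UNIV (\<lambda>_. UNIV))"
    using infsum_Sigma_banach[OF f'] by simp
  finally show ?thesis by simp
qed

lemma sum_ab_seq_act_seq:
  assumes \<delta>: "\<And>m. summable (\<lambda>r. \<Sum>s\<le>m. \<delta> r s * ab_seq w r s u m)"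
  shows "(\<Sum>q\<le>n. \<gamma> p q * ab_seq w p q (\<lambda>m. act_seq w \<delta> u m) n)
       = (\<Sum>r. \<Sum>y\<in>{..n} \<times> {..n} \<times> {..n}. assoc_term \<gamma> \<delta> w u n ((p, r), y))"
proof -
  define H where "H r m = (\<Sum>s\<le>m. \<delta> r s * ab_seq w r s u m)" for r m
  have H: "summable (\<lambda>r. H r m)" for m
    unfolding H_def by (rule \<delta>)
  have "ab_seq w p q (H r) n
      = (\<Sum>s\<le>n. \<delta> r s * (\<Sum>j\<le>n. NO q r (q + r - j) j * ab_seq w (p + (q + r - j)) (j + s) u n))" for q r
  proof -
    have "ab_seq w p q (H r) n = ab_seq w p q (\<lambda>m. \<Sum>s\<le>n. \<delta> r s * ab_seq w r s u m) n"
    proof (rule ab_seq_cong)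
      fix m assume "m \<le> n"
      then show "H r m = (\<Sum>s\<le>n. \<delta> r s * ab_seq w r s u m)"
        unfolding H_def by (intro sum_atMost_eq_sum_atMost) (auto simp: ab_seq_eq_0)
    qed
    then show ?thesis by (simp add: ab_seq_sum ab_seq_cmult ab_seq_ab_seq)
  qed
  then have row: "(\<Sum>q\<le>n. \<gamma> p q * ab_seq w p q (H r) n)
      = (\<Sum>y\<in>{..n} \<times> {..n} \<times> {..n}. assoc_term \<gamma> \<delta> w u n ((p, r), y))" for r
    by (simp add: assoc_term_def sum.cartesian_product[symmetric] sum_distrib_left mult.assoc)
  have "(\<Sum>q\<le>n. \<gamma> p q * ab_seq w p q (\<lambda>m. act_seq w \<delta> u m) n)
      = (\<Sum>q\<le>n. \<Sum>r. \<gamma> p q * ab_seq w p q (H r) n)"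
    unfolding act_seq_def H_def[symmetric] ab_seq_suminf(2)[OF H]
    by (simp add: suminf_mult[OF ab_seq_suminf(1)[OF H]])
  also have "\<dots> = (\<Sum>r. \<Sum>q\<le>n. \<gamma> p q * ab_seq w p q (H r) n)"
    by (rule suminf_sum[symmetric]) (intro summable_mult ab_seq_suminf(1)[OF H])
  finally show ?thesis unfolding row .
qed

lemma act_seq_act_seq_eq_infsum:
  assumes gg: "\<And>p q. norm (\<gamma> p q) \<le> Cg * Rg^(p+q) * fact q" and Cg: "0 \<le> Cg" and Rg: "1 \<le> Rg"
    and gd: "\<And>p q. norm (\<delta> p q) \<le> Cd * Rd^(p+q) * fact q" and Cd: "0 \<le> Cd" and Rd: "1 \<le> Rd"
    and w: "norm w \<le> 1 / (8 * Rg * Rd)"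
  shows "act_seq w \<gamma> (\<lambda>m. act_seq w \<delta> u m) n
       = infsum (assoc_term \<gamma> \<delta> w u n) ((UNIV \<times> UNIV) \<times> ({..n} \<times> {..n} \<times> {..n}))"
proof -
  define box where "box = {..n} \<times> {..n} \<times> {..n}"
  define c where "c p r = (\<Sum>y\<in>box. assoc_term \<gamma> \<delta> w u n ((p, r), y))" for p r
  have t: "assoc_term \<gamma> \<delta> w u n summable_on (UNIV \<times> UNIV) \<times> box"
    unfolding box_def by (rule assoc_term_summable[OF gg Cg Rg gd Cd Rd w])
  have "4 * Rd \<le> 8 * Rg * Rd"
    by (rule mult_right_mono) (use Rg Rd in auto)
  then have "1 / (8 * Rg * Rd) \<le> 1 / (4 * Rd)"
    using Rg Rd by (intro divide_left_mono) auto
  then have w_small: "norm w \<le> 1 / (4 * Rd)"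
    using w by linarith
  have "act_seq w \<gamma> (\<lambda>m. act_seq w \<delta> u m) n = (\<Sum>p. \<Sum>r. c p r)"
    unfolding act_seq_def[of w \<gamma>] c_def box_def
    by (subst sum_ab_seq_act_seq) (auto intro: act_seq_summable[OF gd Cd Rd w_small])
  also have "\<dots> = infsum (\<lambda>(p, r). c p r) UNIV"
  proof (rule suminf_suminf_eq_infsum)
    have "(\<lambda>x. infsum (\<lambda>y. assoc_term \<gamma> \<delta> w u n (x, y)) box) summable_on UNIV \<times> UNIV"
      using t by (rule summable_on_SigmaD) (simp add: box_def)
    then show "(\<lambda>(p, r). c p r) summable_on UNIV"
      by (simp add: c_def box_def case_prod_unfold)
  qed
  also have "\<dots> = infsum (assoc_term \<gamma> \<delta> w u n) ((UNIV \<times> UNIV) \<times> box)"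
    using infsum_Sigma_banach[OF t] by (simp add: c_def box_def case_prod_unfold)
  finally show ?thesis unfolding box_def .
qed

lemma act_seq_amul:
  assumes gg: "\<And>p q. norm (\<gamma> p q) \<le> Cg * Rg^(p+q) * fact q" and Cg: "0 \<le> Cg" and Rg: "1 \<le> Rg"
    and gd: "\<And>p q. norm (\<delta> p q) \<le> Cd * Rd^(p+q) * fact q" and Cd: "0 \<le> Cd" and Rd: "1 \<le> Rd"
    and w: "norm w \<le> 1 / (8 * Rg * Rd)"
  shows "act_seq w (amul \<gamma> \<delta>) u n = act_seq w \<gamma> (\<lambda>m. act_seq w \<delta> u m) n"
  using act_seq_amul_eq_infsum[OF assoc_term_summable[OF assms]] act_seq_act_seq_eq_infsum[OF assms]
  by simp

section \<open>Holomorphy and continuity of the new coefficients\<close>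

text \<open>Grouping the series over p by the power of w that multiplies u (n - k - q) produces the
  power series coeff_series \<gamma> q k, convergent for |w| < 1/(4R).\<close>
definition coeff_series :: "(nat \<Rightarrow> nat \<Rightarrow> complex) \<Rightarrow> nat \<Rightarrow> nat \<Rightarrow> complex \<Rightarrow> complex" where
  "coeff_series \<gamma> q k w = (\<Sum>j. (\<gamma> (j + k) q * of_nat ((j + k) choose k)) * w^j)"

lemma coeff_series_sums:
  assumes g: "\<And>p q. norm (\<gamma> p q) \<le> C * R^(p+q) * fact q" and C: "0 \<le> C" and R: "1 \<le> R"
    and w: "norm w \<le> 1 / (4 * R)"
  shows "(\<lambda>p. \<gamma> p q * of_nat (p choose k) * w^(p-k)) sums coeff_series \<gamma> q k w"
proof -
  define \<rho> where "\<rho> = 1 / (4 * R)"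
  have \<rho>0: "0 < \<rho>" and \<rho>R: "2 * \<rho> * R < 1" using R by (simp_all add: \<rho>_def)
  define G where "G = (\<lambda>p. \<gamma> p q * of_nat (p choose k) * w^(p-k))"
  have G: "summable G"
  proof (rule summable_comparison_test'[where N = 0])
    show "summable (\<lambda>p. (C * R^q * fact q / \<rho>^k) * (2*\<rho>*R)^p)"
      using \<rho>R \<rho>0 R by (intro summable_mult summable_geometric) auto
    fix p
    show "norm (G p) \<le> (C * R^q * fact q / \<rho>^k) * (2*\<rho>*R)^p"
    proof (cases "k \<le> p")
      case True
      have "norm (G p) = norm (\<gamma> p q) * real (p choose k) * norm w ^ (p - k)"
        by (simp add: G_def norm_mult norm_power)
      also have "\<dots> \<le> (C * R^(p+q) * fact q) * 2^p * \<rho>^(p - k)"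
        using w \<rho>0 C R by (intro mult_mono power_mono g) (auto simp: \<rho>_def binomial_le_pow2)
      also have "\<rho>^(p - k) = \<rho>^p / \<rho>^k" using True \<rho>0 by (simp add: power_diff)
      also have "(C * R^(p+q) * fact q) * 2^p * (\<rho>^p / \<rho>^k) = (C * R^q * fact q / \<rho>^k) * (2*\<rho>*R)^p"
        by (simp add: power_add power_mult_distrib field_simps)
      finally show ?thesis .
    next
      case False
      then show ?thesis using C R \<rho>0 by (simp add: G_def binomial_eq_0)
    qed
  qed
  have "suminf G = (\<Sum>j. G (j + k)) + (\<Sum>i<k. G i)"
    by (rule suminf_split_initial_segment[OF G])
  also have "(\<Sum>i<k. G i) = 0" by (rule sum.neutral) (auto simp: G_def binomial_eq_0)
  finally have "suminf G = coeff_series \<gamma> q k w" by (simp add: G_def coeff_series_def)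
  with summable_sums[OF G] show ?thesis unfolding G_def by simp
qed

lemma coeff_series_field_differentiable:
  assumes g: "\<And>p q. norm (\<gamma> p q) \<le> C * R^(p+q) * fact q" and C: "0 \<le> C" and R: "1 \<le> R"
    and w: "norm w < 1 / (4 * R)"
  shows "coeff_series \<gamma> q k field_differentiable at w"
proof -
  define c where "c j = \<gamma> (j + k) q * of_nat ((j + k) choose k)" for j
  define K :: complex where "K = of_real (1 / (4 * R))"
  have nK: "norm K = 1 / (4 * R)" unfolding K_def norm_of_real using R by simp
  have sm: "summable (\<lambda>j. c j * K^j)"
  proof (rule summable_comparison_test'[where N = 0])
    show "summable (\<lambda>j. (C * R^(k+q) * fact q * 2^k) * (1/2::real)^j)"
      by (intro summable_mult summable_geometric) auto
    fix j
    have "norm (c j * K^j) = norm (\<gamma> (j + k) q) * real ((j + k) choose k) * (1 / (4 * R))^j"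
      by (simp add: c_def nK norm_mult norm_power)
    also have "\<dots> \<le> (C * R^(j + k + q) * fact q) * 2^(j+k) * (1 / (4 * R))^j"
      using C R by (intro mult_mono g) (auto simp: binomial_le_pow2)
    also have "\<dots> = (C * R^(k+q) * fact q * 2^k) * (1/2::real)^j"
    proof -
      have "(2::real)^j * 2^j = 4^j" by (simp add: power_mult_distrib[symmetric])
      then show ?thesis using R by (simp add: power_add power_mult_distrib field_simps)
    qed
    finally show "norm (c j * K^j) \<le> (C * R^(k+q) * fact q * 2^k) * (1/2::real)^j" .
  qed
  have "norm w < norm K" using w by (simp add: nK)
  from termdiffs_strong[OF sm this] show ?thesis
    unfolding field_differentiable_def coeff_series_def c_def[symmetric] by blast
qed

definition expansion_weight :: "nat \<Rightarrow> nat \<Rightarrow> nat \<Rightarrow> (nat \<Rightarrow> complex) \<Rightarrow> complex" where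
  "expansion_weight n q k u = of_nat (ffact_pred n k) * (if q + k \<le> n then u (n - k - q) else 0)"

lemma act_seq_eq_expansion:
  assumes g: "\<And>p q. norm (\<gamma> p q) \<le> C * R^(p+q) * fact q" and C: "0 \<le> C" and R: "1 \<le> R"
    and w: "norm w \<le> 1 / (4 * R)"
  shows "act_seq w \<gamma> u n = (\<Sum>q\<le>n. \<Sum>k\<le>n. expansion_weight n q k u * coeff_series \<gamma> q k w)"
proof -
  define G where "G q k p = \<gamma> p q * of_nat (p choose k) * w^(p-k)" for q k p
  have G: "G q k sums coeff_series \<gamma> q k w" for q k
    unfolding G_def by (rule coeff_series_sums[OF g C R w])
  have "(\<Sum>q\<le>n. \<gamma> p q * ab_seq w p q u n) = (\<Sum>q\<le>n. \<Sum>k\<le>n. expansion_weight n q k u * G q k p)" for p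
  proof (rule sum.cong[OF refl])
    fix q
    have ab: "ab_seq w p q u n = (\<Sum>k\<le>n. ab_coeff w p q n k * u (n - k - q))"
      unfolding ab_seq_eq_sum by (rule sum_atMost_eq_sum_atMost) (auto simp: ab_coeff_def)
    show "\<gamma> p q * ab_seq w p q u n = (\<Sum>k\<le>n. expansion_weight n q k u * G q k p)"
      unfolding ab sum_distrib_left
      by (intro sum.cong refl) (auto simp: expansion_weight_def G_def ab_coeff_def)
  qed
  then have "act_seq w \<gamma> u n = (\<Sum>p. \<Sum>q\<le>n. \<Sum>k\<le>n. expansion_weight n q k u * G q k p)"
    unfolding act_seq_def by simp
  also have "\<dots> = (\<Sum>q\<le>n. \<Sum>p. \<Sum>k\<le>n. expansion_weight n q k u * G q k p)"
    using G by (intro suminf_sum summable_sum summable_mult sums_summable)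
  also have "\<dots> = (\<Sum>q\<le>n. \<Sum>k\<le>n. \<Sum>p. expansion_weight n q k u * G q k p)"
    using G by (intro sum.cong refl suminf_sum summable_mult sums_summable)
  also have "\<dots> = (\<Sum>q\<le>n. \<Sum>k\<le>n. expansion_weight n q k u * coeff_series \<gamma> q k w)"
    by (intro sum.cong refl) (simp add: suminf_mult[OF sums_summable[OF G]] sums_unique[OF G, symmetric])
  finally show ?thesis .
qed

definition act_expansion :: "('a \<Rightarrow> complex) \<Rightarrow> (nat \<Rightarrow> nat \<Rightarrow> complex) \<Rightarrow> (nat \<Rightarrow> 'a \<Rightarrow> complex) \<Rightarrow> nat \<Rightarrow> 'a \<Rightarrow> complex" where
  "act_expansion f \<gamma> g n x = (\<Sum>q\<le>n. \<Sum>k\<le>n. expansion_weight n q k (\<lambda>m. g m x) * coeff_series \<gamma> q k (f x))"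

lemma act_eq_act_expansion:
  assumes g: "\<And>p q. norm (\<gamma> p q) \<le> C * R^(p+q) * fact q" and C: "0 \<le> C" and R: "1 \<le> R"
    and fx: "norm (f x) \<le> 1 / (4 * R)"
  shows "act f \<gamma> g n x = act_expansion f \<gamma> g n x"
  unfolding act_eq_act_seq act_expansion_def by (rule act_seq_eq_expansion[OF g C R fx])

lemma cholo_const: "cholo (\<lambda>z. c) S"
  unfolding cholo_def by (auto intro!: exI[of _ "\<lambda>v. 0"])

lemma cholo_add:
  assumes "cholo f S" "cholo g S"
  shows "cholo (\<lambda>z. f z + g z) S"
  unfolding cholo_def
proof
  fix z assume "z \<in> S"
  then obtain L1 L2 where L1: "(f has_derivative L1) (at z)" "\<forall>c v. L1 (c *s v) = c * L1 v"
    and L2: "(g has_derivative L2) (at z)" "\<forall>c v. L2 (c *s v) = c * L2 v"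
    using assms unfolding cholo_def by meson
  show "\<exists>L. ((\<lambda>z. f z + g z) has_derivative L) (at z) \<and> (\<forall>c v. L (c *s v) = c * L v)"
    using has_derivative_add[OF L1(1) L2(1)] L1(2) L2(2) by (auto simp: algebra_simps)
qed

lemma cholo_mult:
  assumes "cholo f S" "cholo g S"
  shows "cholo (\<lambda>z. f z * g z) S"
  unfolding cholo_def
proof
  fix z assume "z \<in> S"
  then obtain L1 L2 where L1: "(f has_derivative L1) (at z)" "\<forall>c v. L1 (c *s v) = c * L1 v"
    and L2: "(g has_derivative L2) (at z)" "\<forall>c v. L2 (c *s v) = c * L2 v"
    using assms unfolding cholo_def by meson
  show "\<exists>L. ((\<lambda>z. f z * g z) has_derivative L) (at z) \<and> (\<forall>c v. L (c *s v) = c * L v)"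
    using has_derivative_mult[OF L1(1) L2(1)] L1(2) L2(2) by (auto simp: algebra_simps)
qed

lemma cholo_sum: "finite I \<Longrightarrow> (\<And>i. i \<in> I \<Longrightarrow> cholo (f i) S) \<Longrightarrow> cholo (\<lambda>z. \<Sum>i\<in>I. f i z) S"
  by (induction I rule: finite_induct) (simp_all add: cholo_const cholo_add)

lemma cholo_compose_field_differentiable:
  assumes h: "cholo h S" and F: "\<And>z. z \<in> S \<Longrightarrow> F field_differentiable at (h z)"
  shows "cholo (\<lambda>z. F (h z)) S"
  unfolding cholo_def
proof
  fix z assume z: "z \<in> S"
  obtain L where L: "(h has_derivative L) (at z)" "\<forall>c v. L (c *s v) = c * L v"
    using h z unfolding cholo_def by blast
  obtain D where D: "(F has_field_derivative D) (at (h z))"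
    using F[OF z] unfolding field_differentiable_def by blast
  have "((F \<circ> h) has_derivative ((*) D \<circ> L)) (at z)"
    by (rule diff_chain_at[OF L(1)]) (use D in \<open>simp add: has_field_derivative_def\<close>)
  then show "\<exists>L. ((\<lambda>z. F (h z)) has_derivative L) (at z) \<and> (\<forall>c v. L (c *s v) = c * L v)"
    using L(2) by (intro exI[of _ "(*) D \<circ> L"]) (auto simp: o_def algebra_simps)
qed

lemma cholo_transform:
  assumes h: "cholo h S" and T: "\<And>z. z \<in> S \<Longrightarrow> \<exists>T. open T \<and> z \<in> T \<and> (\<forall>z'\<in>T. h z' = h' z')"
  shows "cholo h' S"
  unfolding cholo_def
proof
  fix z assume z: "z \<in> S"
  obtain L where L: "(h has_derivative L) (at z)" "\<forall>c v. L (c *s v) = c * L v"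
    using h z unfolding cholo_def by blast
  obtain T where "open T" "z \<in> T" "\<forall>z'\<in>T. h z' = h' z'" using T z by blast
  then have "(h' has_derivative L) (at z)"
    by (intro has_derivative_transform_within_open[OF L(1)]) auto
  then show "\<exists>L. (h' has_derivative L) (at z) \<and> (\<forall>c v. L (c *s v) = c * L v)" using L(2) by blast
qed

lemma cholo_subset: "S' \<subseteq> S \<Longrightarrow> cholo h S \<Longrightarrow> cholo h S'"
  unfolding cholo_def by blast

lemma cholo_imp_continuous_on: "cholo h S \<Longrightarrow> open S \<Longrightarrow> continuous_on S h"
  unfolding cholo_def
  by (metis continuous_at_imp_continuous_on has_derivative_continuous)

lemma complex_atlasD:
  assumes "complex_atlas A" "(U, \<phi>) \<in> A"
  shows "open U" "open (\<phi> ` U)" "homeomorphism U (\<phi> ` U) \<phi> (inv_into U \<phi>)"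
  using assms unfolding complex_atlas_def by auto

lemma open_chart_image:
  assumes "complex_atlas A" "(U, \<phi>) \<in> A" "open W"
  shows "open (\<phi> ` (U \<inter> W))"
proof -
  note ch = complex_atlasD[OF assms(1,2)]
  have "open (U \<inter> W)" using ch(1) assms(3) by auto
  then have "openin (top_of_set (\<phi> ` U)) (\<phi> ` (U \<inter> W))"
    using homeomorphism_imp_open_map[OF ch(3) open_openin_trans[OF ch(1)]] by blast
  then show ?thesis using ch(2) openin_open_trans by blast
qed

lemma mholo_imp_continuous_on:
  fixes A :: "('a::t2_space set \<times> ('a \<Rightarrow> complex^'n)) set"
  assumes atlas: "complex_atlas A" and fh: "mholo A f W" and W: "open W"
  shows "continuous_on W f"
proof -
  have "isCont f x" if x: "x \<in> W" for x
  proof -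
    have "x \<in> \<Union>(fst ` A)" using atlas unfolding complex_atlas_def by auto
    then obtain U \<phi> where U: "(U, \<phi>) \<in> A" "x \<in> U" by force
    note ch = complex_atlasD[OF atlas U(1)]
    define \<psi> where "\<psi> = inv_into U \<phi>"
    have hom: "homeomorphism U (\<phi> ` U) \<phi> \<psi>" using ch(3) by (simp add: \<psi>_def)
    have "cholo (f \<circ> \<psi>) (\<phi> ` (U \<inter> W))" using fh U(1) unfolding mholo_def \<psi>_def by auto
    then have c1: "continuous_on (\<phi> ` (U \<inter> W)) (f \<circ> \<psi>)"
      by (rule cholo_imp_continuous_on[OF _ open_chart_image[OF atlas U(1) W]])
    have c2: "continuous_on (U \<inter> W) \<phi>"
      using hom by (meson continuous_on_subset homeomorphism_def inf_le1)
    have "continuous_on (U \<inter> W) ((f \<circ> \<psi>) \<circ> \<phi>)"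
      by (rule continuous_on_compose[OF c2 c1])
    moreover have "continuous_on (U \<inter> W) ((f \<circ> \<psi>) \<circ> \<phi>) \<longleftrightarrow> continuous_on (U \<inter> W) f"
      by (rule continuous_on_cong[OF refl]) (use hom in \<open>auto simp: homeomorphism_def\<close>)
    ultimately have "continuous_on (U \<inter> W) f" by simp
    then show ?thesis using ch(1) W U(2) x continuous_on_eq_continuous_at by blast
  qed
  then show ?thesis by (simp add: continuous_at_imp_continuous_on)
qed

lemma mholo_subset:
  assumes "W' \<subseteq> W" "mholo A h W"
  shows "mholo A h W'"
  unfolding mholo_def
proof clarify
  fix U \<phi> assume "(U, \<phi>) \<in> A"
  then have "cholo (h \<circ> inv_into U \<phi>) (\<phi> ` (U \<inter> W))" using assms(2) unfolding mholo_def by auto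
  then show "cholo (h \<circ> inv_into U \<phi>) (\<phi> ` (U \<inter> W'))"
    by (rule cholo_subset[rotated]) (use assms(1) in auto)
qed

lemma mholo_cong:
  assumes atlas: "complex_atlas A" and W: "open W" and h: "mholo A h W"
    and eq: "\<And>x. x \<in> W \<Longrightarrow> h x = h' x"
  shows "mholo A h' W"
  unfolding mholo_def
proof clarify
  fix U \<phi> assume U: "(U, \<phi>) \<in> A"
  have hom: "homeomorphism U (\<phi> ` U) \<phi> (inv_into U \<phi>)" by (rule complex_atlasD[OF atlas U])
  show "cholo (h' \<circ> inv_into U \<phi>) (\<phi> ` (U \<inter> W))"
  proof (rule cholo_transform)
    show "cholo (h \<circ> inv_into U \<phi>) (\<phi> ` (U \<inter> W))" using h U unfolding mholo_def by auto
    fix z assume "z \<in> \<phi> ` (U \<inter> W)"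
    moreover have "(h \<circ> inv_into U \<phi>) z' = (h' \<circ> inv_into U \<phi>) z'" if "z' \<in> \<phi> ` (U \<inter> W)" for z'
      using that hom eq unfolding homeomorphism_def by auto
    ultimately show "\<exists>T. open T \<and> z \<in> T \<and> (\<forall>z'\<in>T. (h \<circ> inv_into U \<phi>) z' = (h' \<circ> inv_into U \<phi>) z')"
      using open_chart_image[OF atlas U W] by blast
  qed
qed

lemma mholo_act_expansion:
  fixes A :: "('a::topological_space set \<times> ('a \<Rightarrow> complex^'n)) set"
  assumes atlas: "complex_atlas A" and fh: "mholo A f UNIV" and gh: "\<And>m. mholo A (g m) W"
    and fW: "\<And>x. x \<in> W \<Longrightarrow> norm (f x) < 1 / (4 * R)"
    and g: "\<And>p q. norm (\<gamma> p q) \<le> C * R^(p+q) * fact q" and C: "0 \<le> C" and R: "1 \<le> R"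
  shows "mholo A (act_expansion f \<gamma> g n) W"
  unfolding mholo_def
proof clarify
  fix U \<phi> assume U: "(U, \<phi>) \<in> A"
  define \<psi> where "\<psi> = inv_into U \<phi>"
  define S where "S = \<phi> ` (U \<inter> W)"
  have \<psi>S: "\<psi> z \<in> W" if "z \<in> S" for z
    using that complex_atlasD(3)[OF atlas U] unfolding S_def \<psi>_def homeomorphism_def by auto
  have f\<psi>: "cholo (\<lambda>z. f (\<psi> z)) S"
    using fh U unfolding mholo_def \<psi>_def S_def by (auto simp: o_def intro: cholo_subset[rotated])
  have "cholo (\<lambda>z. g m (\<psi> z)) S" for m
    using gh[of m] U unfolding mholo_def \<psi>_def S_def by (auto simp: o_def)
  then have weight: "cholo (\<lambda>z. expansion_weight n q k (\<lambda>m. g m (\<psi> z))) S" for q k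
    unfolding expansion_weight_def by (cases "q + k \<le> n") (simp_all add: cholo_mult cholo_const)
  have series: "cholo (\<lambda>z. coeff_series \<gamma> q k (f (\<psi> z))) S" for q k
    using f\<psi> by (rule cholo_compose_field_differentiable)
      (use \<psi>S fW coeff_series_field_differentiable[OF g C R] in blast)
  have "cholo (\<lambda>z. act_expansion f \<gamma> g n (\<psi> z)) S"
    unfolding act_expansion_def by (intro cholo_sum cholo_mult weight series finite_atMost)
  then show "cholo (act_expansion f \<gamma> g n \<circ> inv_into U \<phi>) (\<phi> ` (U \<inter> W))"
    by (simp add: \<psi>_def S_def o_def)
qed

lemma mholo_act:
  fixes A :: "('a::topological_space set \<times> ('a \<Rightarrow> complex^'n)) set"
  assumes atlas: "complex_atlas A" and fh: "mholo A f UNIV" and gh: "\<And>m. mholo A (g m) W"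
    and W: "open W" and fW: "\<And>x. x \<in> W \<Longrightarrow> norm (f x) < 1 / (4 * R)"
    and g: "\<And>p q. norm (\<gamma> p q) \<le> C * R^(p+q) * fact q" and C: "0 \<le> C" and R: "1 \<le> R"
  shows "mholo A (act f \<gamma> g n) W"
  using atlas W mholo_act_expansion[OF atlas fh gh fW g C R]
proof (rule mholo_cong)
  fix x assume "x \<in> W"
  then have "norm (f x) \<le> 1 / (4 * R)" using fW by (simp add: less_imp_le)
  then show "act_expansion f \<gamma> g n x = act f \<gamma> g n x"
    using act_eq_act_expansion[OF g C R, of f x g n] by simp
qed

lemma continuous_on_act:
  fixes f :: "'a::t2_space \<Rightarrow> complex"
  assumes fc: "continuous_on UNIV f" and gc: "\<And>m. continuous_on K (g m)"
    and fK: "\<And>x. x \<in> K \<Longrightarrow> norm (f x) < 1 / (4 * R)"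
    and g: "\<And>p q. norm (\<gamma> p q) \<le> C * R^(p+q) * fact q" and C: "0 \<le> C" and R: "1 \<le> R"
  shows "continuous_on K (act f \<gamma> g n)"
proof -
  have "continuous_on K (\<lambda>x. coeff_series \<gamma> q k (f x))" for q k
  proof (rule continuous_at_imp_continuous_on, rule ballI)
    fix x assume "x \<in> K"
    then have "isCont (coeff_series \<gamma> q k) (f x)"
      using coeff_series_field_differentiable[OF g C R fK] field_differentiable_imp_continuous_at
      by blast
    moreover have "isCont f x" using fc by (simp add: continuous_on_eq_continuous_at)
    ultimately show "isCont (\<lambda>x. coeff_series \<gamma> q k (f x)) x" by (rule isCont_o2[rotated])
  qed
  moreover have "continuous_on K (\<lambda>x. expansion_weight n q k (\<lambda>m. g m x))" for q k
    unfolding expansion_weight_def by (cases "q + k \<le> n") (simp_all add: continuous_on_mult gc)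
  ultimately have "continuous_on K (act_expansion f \<gamma> g n)"
    unfolding act_expansion_def by (intro continuous_on_sum continuous_on_mult)
  moreover have "act_expansion f \<gamma> g n x = act f \<gamma> g n x" if "x \<in> K" for x
    using act_eq_act_expansion[OF g C R, of f x g n] fK[OF that] by simp
  ultimately show ?thesis using continuous_on_cong by blast
qed

section \<open>The module axioms\<close>

lemma act_seq_add_coeffs:
  assumes "summable (\<lambda>p. \<Sum>q\<le>n. \<gamma> p q * ab_seq w p q u n)"
    and "summable (\<lambda>p. \<Sum>q\<le>n. \<delta> p q * ab_seq w p q u n)"
  shows "act_seq w (\<lambda>p q. \<gamma> p q + \<delta> p q) u n = act_seq w \<gamma> u n + act_seq w \<delta> u n"
  unfolding act_seq_def using suminf_add[OF assms] by (simp add: distrib_right sum.distrib)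

lemma act_seq_add_seq:
  assumes "summable (\<lambda>p. \<Sum>q\<le>n. \<gamma> p q * ab_seq w p q u n)"
    and "summable (\<lambda>p. \<Sum>q\<le>n. \<gamma> p q * ab_seq w p q v n)"
  shows "act_seq w \<gamma> (\<lambda>m. u m + v m) n = act_seq w \<gamma> u n + act_seq w \<gamma> v n"
  unfolding act_seq_def using suminf_add[OF assms] by (simp add: ab_seq_add distrib_left sum.distrib)

lemma act_seq_cmult_coeffs:
  assumes "summable (\<lambda>p. \<Sum>q\<le>n. \<gamma> p q * ab_seq w p q u n)"
  shows "act_seq w (\<lambda>p q. c * \<gamma> p q) u n = c * act_seq w \<gamma> u n"
  unfolding act_seq_def using suminf_mult[OF assms, of c] by (simp add: sum_distrib_left mult.assoc)

lemma act_seq_cmult_seq: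
  assumes "summable (\<lambda>p. \<Sum>q\<le>n. \<gamma> p q * ab_seq w p q u n)"
  shows "act_seq w \<gamma> (\<lambda>m. c * u m) n = c * act_seq w \<gamma> u n"
  unfolding act_seq_def using suminf_mult[OF assms, of c]
  by (simp add: ab_seq_cmult sum_distrib_left algebra_simps)

lemma act_seq_single_p:
  assumes "\<And>p q. p \<noteq> P \<Longrightarrow> \<gamma> p q = 0"
  shows "act_seq w \<gamma> u n = (\<Sum>q\<le>n. \<gamma> P q * ab_seq w P q u n)"
proof -
  have "(\<lambda>p. \<Sum>q\<le>n. \<gamma> p q * ab_seq w p q u n) = (\<lambda>p. if p = P then \<Sum>q\<le>n. \<gamma> P q * ab_seq w P q u n else 0)"
    using assms by auto
  then show ?thesis
    unfolding act_seq_def using sums_unique[OF sums_single[of P "\<lambda>_. \<Sum>q\<le>n. \<gamma> P q * ab_seq w P q u n"]]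
    by simp
qed

lemma act_aone: "act f aone g = g"
proof (intro ext)
  fix n x
  have if_one: "(if P then 1 else 0) * y = (if P then y else (0::complex))" for P y
    by simp
  show "act f aone g n x = g n x"
    unfolding act_eq_act_seq
    by (subst act_seq_single_p[where P = 0]) (simp_all add: aone_def ab_seq_def if_one sum.delta)
qed

lemma act_aelt: "act f aelt g = Aop f g"
proof (intro ext)
  fix n x
  have if_one: "(if P then 1 else 0) * y = (if P then y else (0::complex))" for P y
    by simp
  show "act f aelt g n x = Aop f g n x"
    unfolding act_eq_act_seq
    by (subst act_seq_single_p[where P = 1])
      (simp_all add: aelt_def ab_seq_def if_one sum.delta a_seq_def Aop_def)
qed

lemma act_Bemb: "act f (Bemb c) g = Bact c g"
proof (intro ext)
  fix n x
  show "act f (Bemb c) g n x = Bact c g n x"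
    unfolding act_eq_act_seq
    by (subst act_seq_single_p[where P = 0]) (auto simp: Bemb_def Bact_def ab_seq_def b_seq_pow)
qed

lemma in_AconvE:
  assumes "in_Aconv \<gamma>"
  obtains C R where "0 \<le> C" "1 \<le> R" "\<And>p q. norm (\<gamma> p q) \<le> C * R^(p+q) * fact q"
  using assms unfolding in_Aconv_def by (meson less_eq_real_def)

lemma in_Aconv_summable_near_zero:
  assumes "in_Aconv \<gamma>"
  obtains e where "0 < e" "\<And>w u n. norm w < e \<Longrightarrow> summable (\<lambda>p. \<Sum>q\<le>n. \<gamma> p q * ab_seq w p q u n)"
proof -
  obtain C R where b: "0 \<le> C" "1 \<le> R" "\<And>p q. norm (\<gamma> p q) \<le> C * R^(p+q) * fact q"
    using assms in_AconvE by blast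
  show ?thesis
  proof (rule that)
    show "0 < 1 / (4 * R)" using b(2) by simp
    fix w :: complex and u n assume "norm w < 1 / (4 * R)"
    then show "summable (\<lambda>p. \<Sum>q\<le>n. \<gamma> p q * ab_seq w p q u n)"
      by (intro act_seq_summable[OF b(3,1,2)]) simp
  qed
qed

lemma germ_eq_refl: "germ_eq y0 g g"
  unfolding germ_eq_def by blast

lemma germ_eqI_near_zero:
  fixes f :: "'a::topological_space \<Rightarrow> complex"
  assumes "continuous_on UNIV f" "f y0 = 0" "0 < e"
    and "\<And>n x. norm (f x) < e \<Longrightarrow> G n x = H n x"
  shows "germ_eq y0 G H"
proof -
  have "open {x. norm (f x) < e}"
    by (rule open_Collect_less) (auto intro: continuous_intros assms(1))
  then show ?thesis unfolding germ_eq_def using assms(2-4) by force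
qed

lemma germ_eq_act:
  assumes "germ_eq y0 g h"
  shows "germ_eq y0 (act f \<gamma> g) (act f \<gamma> h)"
proof -
  obtain V where "open V" "y0 \<in> V" "\<forall>n. \<forall>x\<in>V. g n x = h n x"
    using assms unfolding germ_eq_def by blast
  then show ?thesis unfolding germ_eq_def act_eq_act_seq by auto
qed

lemma germ_eq_act_amul:
  assumes f: "continuous_on UNIV f" "f y0 = 0" and "in_Aconv \<gamma>" "in_Aconv \<delta>"
  shows "germ_eq y0 (act f (amul \<gamma> \<delta>) g) (act f \<gamma> (act f \<delta> g))"
proof -
  obtain Cg Rg where g: "0 \<le> Cg" "1 \<le> Rg" "\<And>p q. norm (\<gamma> p q) \<le> Cg * Rg^(p+q) * fact q"
    using \<open>in_Aconv \<gamma>\<close> in_AconvE by blast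
  obtain Cd Rd where d: "0 \<le> Cd" "1 \<le> Rd" "\<And>p q. norm (\<delta> p q) \<le> Cd * Rd^(p+q) * fact q"
    using \<open>in_Aconv \<delta>\<close> in_AconvE by blast
  show ?thesis
  proof (rule germ_eqI_near_zero[OF f])
    show "0 < 1 / (8 * Rg * Rd)" using g d by simp
    fix n x assume "norm (f x) < 1 / (8 * Rg * Rd)"
    then show "act f (amul \<gamma> \<delta>) g n x = act f \<gamma> (act f \<delta> g) n x"
      unfolding act_eq_act_seq by (intro act_seq_amul[OF g(3,1,2) d(3,1,2)]) simp
  qed
qed

lemma germ_eq_act_add_coeffs:
  assumes f: "continuous_on UNIV f" "f y0 = 0" and "in_Aconv \<gamma>" "in_Aconv \<delta>"
  shows "germ_eq y0 (act f (\<lambda>p q. \<gamma> p q + \<delta> p q) g) (\<lambda>n x. act f \<gamma> g n x + act f \<delta> g n x)"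
proof -
  obtain e1 where "0 < e1" "\<And>w u n. norm w < e1 \<Longrightarrow> summable (\<lambda>p. \<Sum>q\<le>n. \<gamma> p q * ab_seq w p q u n)"
    using in_Aconv_summable_near_zero[OF assms(3)] by blast
  moreover obtain e2 where "0 < e2" "\<And>w u n. norm w < e2 \<Longrightarrow> summable (\<lambda>p. \<Sum>q\<le>n. \<delta> p q * ab_seq w p q u n)"
    using in_Aconv_summable_near_zero[OF assms(4)] by blast
  ultimately show ?thesis
    by (intro germ_eqI_near_zero[OF f, of "min e1 e2"]) (simp_all add: act_eq_act_seq act_seq_add_coeffs)
qed

lemma germ_eq_act_add_seq:
  assumes f: "continuous_on UNIV f" "f y0 = 0" and "in_Aconv \<gamma>"
  shows "germ_eq y0 (act f \<gamma> (\<lambda>n x. g n x + h n x)) (\<lambda>n x. act f \<gamma> g n x + act f \<gamma> h n x)"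
proof -
  obtain e where "0 < e" "\<And>w u n. norm w < e \<Longrightarrow> summable (\<lambda>p. \<Sum>q\<le>n. \<gamma> p q * ab_seq w p q u n)"
    using in_Aconv_summable_near_zero[OF assms(3)] by blast
  then show ?thesis
    by (intro germ_eqI_near_zero[OF f, of e]) (simp_all add: act_eq_act_seq act_seq_add_seq)
qed

lemma germ_eq_act_cmult:
  assumes f: "continuous_on UNIV f" "f y0 = 0" and "in_Aconv \<gamma>"
  shows "germ_eq y0 (act f (\<lambda>p q. c * \<gamma> p q) g) (\<lambda>n x. c * act f \<gamma> g n x)"
    and "germ_eq y0 (act f \<gamma> (\<lambda>n x. c * g n x)) (\<lambda>n x. c * act f \<gamma> g n x)"
proof -
  obtain e where e: "0 < e"
    and sm: "\<And>w u n. norm w < e \<Longrightarrow> summable (\<lambda>p. \<Sum>q\<le>n. \<gamma> p q * ab_seq w p q u n)"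
    using in_Aconv_summable_near_zero[OF assms(3)] by blast
  show "germ_eq y0 (act f (\<lambda>p q. c * \<gamma> p q) g) (\<lambda>n x. c * act f \<gamma> g n x)"
    using e by (rule germ_eqI_near_zero[OF f]) (simp add: act_eq_act_seq act_seq_cmult_coeffs sm)
  show "germ_eq y0 (act f \<gamma> (\<lambda>n x. c * g n x)) (\<lambda>n x. c * act f \<gamma> g n x)"
    using e by (rule germ_eqI_near_zero[OF f]) (simp add: act_eq_act_seq act_seq_cmult_seq sm)
qed

lemma conv_series_act:
  fixes A :: "('a::t2_space set \<times> ('a \<Rightarrow> complex^'n)) set"
  assumes atlas: "complex_atlas A" and fh: "mholo A f UNIV"
    and g: "\<And>p q. norm (\<gamma> p q) \<le> C * R^(p+q) * fact q" and C: "0 \<le> C" and R: "1 \<le> R"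
    and K0: "conv_series A K0 g" and K: "compact K" "K \<subseteq> K0"
    and fK: "\<And>x. x \<in> K \<Longrightarrow> norm (f x) \<le> 1 / (8 * R)"
  shows "conv_series A K (act f \<gamma> g)"
  unfolding conv_series_def
proof (intro conjI allI)
  have fc: "continuous_on UNIV f" by (rule mholo_imp_continuous_on[OF atlas fh open_UNIV])
  have "1 / (8 * R) < 1 / (4 * R)" using R by (intro divide_strict_left_mono) auto
  then have fK': "norm (f x) < 1 / (4 * R)" if "x \<in> K" for x
    using fK[OF that] by linarith
  show "compact K" by (rule K(1))
  fix m
  show "continuous_on K (act f \<gamma> g m)"
    using K0 K(2) unfolding conv_series_def
    by (intro continuous_on_act[OF fc _ fK' g C R]) (auto intro: continuous_on_subset)
  have "mholo A (g m') (interior K)" for m'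
    using interior_mono[OF K(2)] K0 unfolding conv_series_def by (blast intro: mholo_subset)
  then show "mholo A (act f \<gamma> g m) (interior K)"
    using interior_subset[of K] fK' by (intro mholo_act[OF atlas fh _ open_interior _ g C R]) auto
next
  obtain Rg Cg where Rg: "1 < Rg" and Cg: "0 < Cg"
    and gb: "\<And>m x. x \<in> K0 \<Longrightarrow> norm (g m x) \<le> Cg * Rg^m * fact m"
    using K0 unfolding conv_series_def by blast
  show "\<exists>R'>1. \<exists>C'>0. \<forall>m. \<forall>x\<in>K. norm (act f \<gamma> g m x) \<le> C' * R' ^ m * fact m"
  proof (intro exI conjI allI ballI)
    have "1 \<le> 32 * R * R" using R mult_mono[of 1 "32 * R" 1 R] by simp
    then have "1 * 1 < (32 * R * R) * Rg" using Rg by (intro mult_le_less_imp_less) auto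
    then show "1 < 32 * R * R * Rg" by simp
    have "0 \<le> 2 * C * Cg" using C Cg by simp
    then show "0 < 2 * C * Cg + 1" by linarith
    fix m x assume "x \<in> K"
    then have "norm (act f \<gamma> g m x) \<le> (2 * C * Cg) * (32 * R * R * Rg)^m * fact m"
      unfolding act_eq_act_seq
      using K(2) fK gb Cg Rg by (intro norm_act_seq_le_fact[OF g C R]) auto
    also have "\<dots> \<le> (2 * C * Cg + 1) * (32 * R * R * Rg)^m * fact m"
      using R Rg by (intro mult_right_mono) auto
    finally show "norm (act f \<gamma> g m x) \<le> (2 * C * Cg + 1) * (32 * R * R * Rg)^m * fact m" .
  qed
qed

lemma act_conv_series:
  fixes A :: "('a::t2_space set \<times> ('a \<Rightarrow> complex^'n)) set"
  assumes atlas: "complex_atlas A" and fh: "mholo A f UNIV" and y0: "f y0 = 0"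
    and "in_Aconv \<gamma>" and "is_germ A y0 g"
  shows "\<exists>K. y0 \<in> interior K \<and> conv_series A K (act f \<gamma> g) \<and>
           (\<forall>n. \<forall>x\<in>K. summable (\<lambda>p. \<Sum>q\<le>n. \<gamma> p q * ((Aop f ^^ p) ((bshift ^^ q) g)) n x))"
proof -
  have fc: "continuous_on UNIV f" by (rule mholo_imp_continuous_on[OF atlas fh open_UNIV])
  obtain C R where g: "0 \<le> C" "1 \<le> R" "\<And>p q. norm (\<gamma> p q) \<le> C * R^(p+q) * fact q"
    using \<open>in_Aconv \<gamma>\<close> in_AconvE by blast
  obtain K0 where K0: "y0 \<in> interior K0" "conv_series A K0 g"
    using \<open>is_germ A y0 g\<close> unfolding is_germ_def by blast
  define K where "K = K0 \<inter> {x. norm (f x) \<le> 1 / (8 * R)}"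
  have "compact K"
    using K0(2) unfolding K_def conv_series_def
    by (intro compact_Int_closed closed_Collect_le) (auto intro: continuous_intros fc)
  then have "conv_series A K (act f \<gamma> g)"
    by (rule conv_series_act[OF atlas fh g(3,1,2) K0(2)]) (auto simp: K_def)
  moreover have "y0 \<in> interior K"
  proof -
    have "open (interior K0 \<inter> {x. norm (f x) < 1 / (8 * R)})"
      by (intro open_Int open_interior open_Collect_less) (auto intro: continuous_intros fc)
    moreover have "interior K0 \<inter> {x. norm (f x) < 1 / (8 * R)} \<subseteq> K"
      using interior_subset[of K0] by (auto simp: K_def)
    ultimately have "interior K0 \<inter> {x. norm (f x) < 1 / (8 * R)} \<subseteq> interior K"
      by (rule interior_maximal[rotated])
    then show ?thesis using K0(1) y0 g(2) by auto
  qed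
  moreover have "summable (\<lambda>p. \<Sum>q\<le>n. \<gamma> p q * ((Aop f ^^ p) ((bshift ^^ q) g)) n x)" if "x \<in> K" for n x
    unfolding Aop_pow_bshift_pow using that g(2)
    by (intro act_seq_summable[OF g(3,1,2)]) (auto simp: K_def field_simps)
  ultimately show ?thesis by blast
qed

theorem proposition2p2p3:
  fixes A :: "('a::{t2_space, second_countable_topology} set \<times> ('a \<Rightarrow> complex^'n)) set"
    and f :: "'a \<Rightarrow> complex" and y0 :: 'a
  assumes atlas: "complex_atlas A"
    and f_holo: "mholo A f UNIV"
    and y0_Y: "f y0 = 0"
  shows
    \<comment> \<open>the action of tilde-A_conv is well defined on germs at y0\<close>
    "(\<forall>\<gamma> g. in_Aconv \<gamma> \<and> is_germ A y0 g \<longrightarrow>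
        (\<exists>K. y0 \<in> interior K \<and> conv_series A K (act f \<gamma> g) \<and>
             (\<forall>n. \<forall>x\<in>K. summable (\<lambda>p. \<Sum>q\<le>n. \<gamma> p q * ((Aop f ^^ p) ((bshift ^^ q) g)) n x))))
     \<and> (\<forall>\<gamma> g h. in_Aconv \<gamma> \<and> is_germ A y0 g \<and> germ_eq y0 g h \<longrightarrow>
          germ_eq y0 (act f \<gamma> g) (act f \<gamma> h))
     \<and> (\<forall>\<gamma> \<delta> g. in_Aconv \<gamma> \<and> in_Aconv \<delta> \<and> is_germ A y0 g \<longrightarrow>
          germ_eq y0 (act f (amul \<gamma> \<delta>) g) (act f \<gamma> (act f \<delta> g)))
     \<and> (\<forall>g. is_germ A y0 g \<longrightarrow> germ_eq y0 (act f aone g) g)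
     \<and> (\<forall>\<gamma> \<delta> g. in_Aconv \<gamma> \<and> in_Aconv \<delta> \<and> is_germ A y0 g \<longrightarrow>
          germ_eq y0 (act f (\<lambda>p q. \<gamma> p q + \<delta> p q) g) (\<lambda>n x. act f \<gamma> g n x + act f \<delta> g n x))
     \<and> (\<forall>\<gamma> g h. in_Aconv \<gamma> \<and> is_germ A y0 g \<and> is_germ A y0 h \<longrightarrow>
          germ_eq y0 (act f \<gamma> (\<lambda>n x. g n x + h n x)) (\<lambda>n x. act f \<gamma> g n x + act f \<gamma> h n x))
     \<and> (\<forall>c \<gamma> g. in_Aconv \<gamma> \<and> is_germ A y0 g \<longrightarrow>
          germ_eq y0 (act f (\<lambda>p q. c * \<gamma> p q) g) (\<lambda>n x. c * act f \<gamma> g n x)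
        \<and> germ_eq y0 (act f \<gamma> (\<lambda>n x. c * g n x)) (\<lambda>n x. c * act f \<gamma> g n x))
     \<and> (\<forall>c g. in_B c \<and> is_germ A y0 g \<longrightarrow> germ_eq y0 (act f (Bemb c) g) (Bact c g))
     \<and> (\<forall>g. is_germ A y0 g \<longrightarrow> germ_eq y0 (act f aelt g) (Aop f g))"
proof -
  have fc: "continuous_on UNIV f" by (rule mholo_imp_continuous_on[OF atlas f_holo open_UNIV])
  show ?thesis
    using act_conv_series[OF atlas f_holo y0_Y] germ_eq_act germ_eq_act_amul[OF fc y0_Y]
      germ_eq_act_add_coeffs[OF fc y0_Y] germ_eq_act_add_seq[OF fc y0_Y] germ_eq_act_cmult[OF fc y0_Y]
    by (auto simp: act_aone act_Bemb act_aelt germ_eq_refl intro: germ_eq_act)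
qed

end
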